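(* Consider the MTGC algorithm described in the context. Suppose (A1) and (A2) hold. Then for every global round $t$, $$\sum_{e=0}^{E-1}\frac1N\sum_{j=1}^N\Theta_j^{t,e}\le8\gamma^2H^2L^2Q_t+8\gamma^2H^2L^2D_t+8\gamma^2H^2\sum_{e=0}^{E-1}\frac1N\sum_{j=1}^NY_j^{t,e}+8\gamma^2H^2\sum_{e=0}^{E-1}\mathbb E\|\nabla f(\hat{\boldsymbol x}^{t,e})\|^2+2\gamma^2EH\frac1N\sum_{j=1}^N\frac1{n_j}\sigma^2.$$
   Context: Setting: $N$ groups; group $j$ has a set $\mathcal C_j$ of $n_j\ge1$ clients, sets pairwise disjoint. Client $i$ has distribution $\mathcal D_i$, stochastic loss $F_i(\boldsymbol x,\xi)$, $F_i(\boldsymbol x)=\mathbb E_{\xi\sim\mathcal D_i}F_i(\boldsymbol x,\xi)$; $f_j=\frac1{n_j}\sum_{i\in\mathcal C_j}F_i$, $f=\frac1N\sum_jf_j$. For client $i$, $j$ denotes its group. (A1): $\|\nabla F_i(\boldsymbol x)-\nabla F_i(\boldsymbol y)\|\le L\|\boldsymbol x-\boldsymbol y\|$ for all $\boldsymbol x,\boldsymbol y,i$. (A2): $\mathbb E_{\xi\sim\mathcal D_i}\nabla F_i(\boldsymbol x,\xi)=\nabla F_i(\boldsymbol x)$ and $\mathbb E_{\xi\sim\mathcal D_i}\|\nabla F_i(\boldsymbol x,\xi)-\nabla F_i(\boldsymbol x)\|^2\le\sigma^2$ for all $\boldsymbol x,i$. MTGC: initial $\bar{\boldsymbol x}^0$,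 integers $E,H\ge1$, $\gamma>0$; samples $\xi_{i,h}^{t,e}\sim\mathcal D_i$ fresh and independent of the past. $\boldsymbol y_j^0=-\frac1{n_j}\sum_{i\in\mathcal C_j}\nabla F_i(\bar{\boldsymbol x}^0,\xi_{i,0}^{0,0})+\frac1N\sum_{j'}\frac1{n_{j'}}\sum_{i\in\mathcal C_{j'}}\nabla F_i(\bar{\boldsymbol x}^0,\xi_{i,0}^{0,0})$. For each $t\ge0$: $\bar{\boldsymbol x}_j^{t,0}=\bar{\boldsymbol x}^t$; $\boldsymbol z_i^{t,0}=-\nabla F_i(\bar{\boldsymbol x}^t,\xi_{i,0}^{t,0})+\frac1{n_j}\sum_{i'\in\mathcal C_j}\nabla F_{i'}(\bar{\boldsymbol x}^t,\xi_{i',0}^{t,0})$; for $e=0,\dots,E-1$: $\boldsymbol x_{i,0}^{t,e}=\bar{\boldsymbol x}_j^{t,e}$, $\boldsymbol x_{i,h+1}^{t,e}=\boldsymbol x_{i,h}^{t,e}-\gamma(\nabla F_i(\boldsymbol x_{i,h}^{t,e},\xi_{i,h}^{t,e})+\boldsymbol z_i^{t,e}+\boldsymbol y_j^t)$ for $h=0,\dots,H-1$, $\bar{\boldsymbol x}_j^{t,e+1}=\frac1{n_j}\sum_{i\in\mathcal C_j}\boldsymbol x_{i,H}^{t,e}$, $\boldsymbol z_i^{t,e+1}=\boldsymbol z_i^{t,e}+\frac1{H\gamma}(\boldsymbol x_{i,H}^{t,e}-\bar{\boldsymbol x}_j^{t,e+1})$; then $\bar{\boldsymbol x}^{t+1}=\frac1N\sum_j\bar{\boldsymbol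 x}_j^{t,E}$, $\boldsymbol y_j^{t+1}=\boldsymbol y_j^t+\frac1{HE\gamma}(\bar{\boldsymbol x}_j^{t,E}-\bar{\boldsymbol x}^{t+1})$. $\mathbb E$ is over all randomness. Notation: $\hat{\boldsymbol x}^{t,e}=\frac1N\sum_j\bar{\boldsymbol x}_j^{t,e}$; $\Theta_j^{t,e}=\mathbb E\|\bar{\boldsymbol x}_j^{t,e+1}-\bar{\boldsymbol x}_j^{t,e}\|^2$; $Y_j^{t,e}=\mathbb E\|\boldsymbol y_j^t+\nabla f_j(\hat{\boldsymbol x}^{t,e})-\nabla f(\hat{\boldsymbol x}^{t,e})\|^2$; $D_t=\sum_{e=0}^{E-1}\frac1N\sum_j\mathbb E\|\hat{\boldsymbol x}^{t,e}-\bar{\boldsymbol x}_j^{t,e}\|^2$; $Q_t=\sum_{e=0}^{E-1}\frac1{NH}\sum_j\frac1{n_j}\sum_{i\in\mathcal C_j}\sum_{h=0}^{H-1}\mathbb E\|\bar{\boldsymbol x}_j^{t,e}-\boldsymbol x_{i,h}^{t,e}\|^2$. *)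

theory Defs
  imports "HOL-Probability.Probability"
begin

text \<open>MTGC iterates as deterministic functions of a sample path
  xi i t e h (client i, global round t, group round e, local step h).
  g i x s is the stochastic gradient of client i at x for sample s.\<close>

fun mtgc_local :: "(nat \<Rightarrow> 'a \<Rightarrow> 's \<Rightarrow> 'a::real_vector) \<Rightarrow> real \<Rightarrow> nat \<Rightarrow> (nat \<Rightarrow> 's)
    \<Rightarrow> 'a \<Rightarrow> 'a \<Rightarrow> nat \<Rightarrow> 'a" where
  "mtgc_local g \<gamma> i s x0 c 0 = x0"
| "mtgc_local g \<gamma> i s x0 c (Suc h) =
     (let xh = mtgc_local g \<gamma> i s x0 c h in xh - \<gamma> *\<^sub>R (g i xh (s h) + c))"

text \<open>Group-level loop of group j in global round t, started at xb with group correction y;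
  returns (xbar_j^{t,e}, z^{t,e}).\<close>
fun mtgc_inner :: "(nat \<Rightarrow> 'a \<Rightarrow> 's \<Rightarrow> 'a::real_vector) \<Rightarrow> (nat \<Rightarrow> nat set) \<Rightarrow> nat \<Rightarrow> real
    \<Rightarrow> (nat \<Rightarrow> nat \<Rightarrow> nat \<Rightarrow> nat \<Rightarrow> 's) \<Rightarrow> nat \<Rightarrow> nat \<Rightarrow> 'a \<Rightarrow> 'a \<Rightarrow> nat \<Rightarrow> 'a \<times> (nat \<Rightarrow> 'a)" where
  "mtgc_inner g C H \<gamma> xi j t xb y 0 =
     (xb, \<lambda>i. - g i xb (xi i t 0 0)
              + (1 / real (card (C j))) *\<^sub>R (\<Sum>i'\<in>C j. g i' xb (xi i' t 0 0)))"
| "mtgc_inner g C H \<gamma> xi j t xb y (Suc e) =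
     (let (xbe, z) = mtgc_inner g C H \<gamma> xi j t xb y e;
          xH = (\<lambda>i. mtgc_local g \<gamma> i (xi i t e) xbe (z i + y) H);
          xbe' = (1 / real (card (C j))) *\<^sub>R (\<Sum>i\<in>C j. xH i)
      in (xbe', \<lambda>i. z i + (1 / (real H * \<gamma>)) *\<^sub>R (xH i - xbe')))"

fun mtgc_outer :: "(nat \<Rightarrow> 'a \<Rightarrow> 's \<Rightarrow> 'a::real_vector) \<Rightarrow> (nat \<Rightarrow> nat set) \<Rightarrow> nat \<Rightarrow> nat \<Rightarrow> nat
    \<Rightarrow> real \<Rightarrow> 'a \<Rightarrow> (nat \<Rightarrow> nat \<Rightarrow> nat \<Rightarrow> nat \<Rightarrow> 's) \<Rightarrow> nat \<Rightarrow> 'a \<times> (nat \<Rightarrow> 'a)" where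
  "mtgc_outer g C N E H \<gamma> x0 xi 0 =
     (x0, \<lambda>j. - (1 / real (card (C j))) *\<^sub>R (\<Sum>i\<in>C j. g i x0 (xi i 0 0 0))
             + (1 / real N) *\<^sub>R (\<Sum>j'<N. (1 / real (card (C j'))) *\<^sub>R (\<Sum>i\<in>C j'. g i x0 (xi i 0 0 0))))"
| "mtgc_outer g C N E H \<gamma> x0 xi (Suc t) =
     (let (xb, y) = mtgc_outer g C N E H \<gamma> x0 xi t;
          xE = (\<lambda>j. fst (mtgc_inner g C H \<gamma> xi j t xb (y j) E));
          xb' = (1 / real N) *\<^sub>R (\<Sum>j<N. xE j)
      in (xb', \<lambda>j. y j + (1 / (real H * real E * \<gamma>)) *\<^sub>R (xE j - xb')))"

definition mtgc_xbar where
  "mtgc_xbar g C N E H \<gamma> x0 xi t = fst (mtgc_outer g C N E H \<gamma> x0 xi t)"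

definition mtgc_y where
  "mtgc_y g C N E H \<gamma> x0 xi t j = snd (mtgc_outer g C N E H \<gamma> x0 xi t) j"

definition mtgc_xbarj where
  "mtgc_xbarj g C N E H \<gamma> x0 xi j t e =
     fst (mtgc_inner g C H \<gamma> xi j t (mtgc_xbar g C N E H \<gamma> x0 xi t) (mtgc_y g C N E H \<gamma> x0 xi t j) e)"

definition mtgc_z where
  "mtgc_z g C N E H \<gamma> x0 xi j t e i =
     snd (mtgc_inner g C H \<gamma> xi j t (mtgc_xbar g C N E H \<gamma> x0 xi t) (mtgc_y g C N E H \<gamma> x0 xi t j) e) i"

definition mtgc_x where
  "mtgc_x g C N E H \<gamma> x0 xi j t e i h =
     mtgc_local g \<gamma> i (xi i t e) (mtgc_xbarj g C N E H \<gamma> x0 xi j t e)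
       (mtgc_z g C N E H \<gamma> x0 xi j t e i + mtgc_y g C N E H \<gamma> x0 xi t j) h"

text \<open>Gradients of f_j and f, written via the client gradients GF i = nabla F_i.\<close>
definition grad_fj :: "(nat \<Rightarrow> 'a \<Rightarrow> 'a::real_vector) \<Rightarrow> (nat \<Rightarrow> nat set) \<Rightarrow> nat \<Rightarrow> 'a \<Rightarrow> 'a" where
  "grad_fj GF C j x = (1 / real (card (C j))) *\<^sub>R (\<Sum>i\<in>C j. GF i x)"

definition grad_f :: "(nat \<Rightarrow> 'a \<Rightarrow> 'a::real_vector) \<Rightarrow> (nat \<Rightarrow> nat set) \<Rightarrow> nat \<Rightarrow> 'a \<Rightarrow> 'a" where
  "grad_f GF C N x = (1 / real N) *\<^sub>R (\<Sum>j<N. grad_fj GF C j x)"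

definition mtgc_xhat where
  "mtgc_xhat g C N E H \<gamma> x0 xi t e = (1 / real N) *\<^sub>R (\<Sum>j<N. mtgc_xbarj g C N E H \<gamma> x0 xi j t e)"

definition sample_path :: "(nat \<Rightarrow> nat \<Rightarrow> nat \<Rightarrow> nat \<Rightarrow> 'm \<Rightarrow> 's) \<Rightarrow> 'm \<Rightarrow> nat \<Rightarrow> nat \<Rightarrow> nat \<Rightarrow> nat \<Rightarrow> 's" where
  "sample_path xi w = (\<lambda>i t e h. xi i t e h w)"

end

theory Submission
  imports Defs
begin

text \<open>Because the client corrections z of a group sum to zero, one group round moves the
  group average by -gamma ((1/n) T + sum over h of b h), where T is the gradient noise accumulated
  over the H local steps of all n clients and b h = (1/n) sum over i of nabla F i (x i h) + y.
  Writing b h as the Lipschitz drift of the local iterates from the group average, the drift of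
  the group average from the global average, the correction error y + nabla f j - nabla f and
  nabla f, the four-term inequality and Cauchy-Schwarz over h give the first four terms.
  Each noise summand comes from a fresh sample that is independent of all earlier iterates, so
  the summands are orthogonal and (A2) gives E |T|^2 <= H n sigma^2.  Measurability with respect
  to the earlier samples and square-integrability of all iterates are propagated along the
  recursion.\<close>

section \<open>Norm inequalities\<close>

lemma norm_add_power2_le:
  fixes x y :: "'a::real_normed_vector"
  shows "(norm (x + y))\<^sup>2 \<le> 2 * (norm x)\<^sup>2 + 2 * (norm y)\<^sup>2"
proof -
  have "(norm (x + y))\<^sup>2 \<le> (norm x + norm y)\<^sup>2"
    by (intro power_mono norm_triangle_ineq) auto
  also have "\<dots> \<le> 2 * (norm x)\<^sup>2 + 2 * (norm y)\<^sup>2"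
    using zero_le_power2[of "norm x - norm y"] by (simp add: power2_sum power2_diff)
  finally show ?thesis .
qed

lemma norm_add4_power2_le:
  fixes a b c d :: "'a::real_normed_vector"
  shows "(norm (a + b + c + d))\<^sup>2 \<le> 4 * ((norm a)\<^sup>2 + (norm b)\<^sup>2 + (norm c)\<^sup>2 + (norm d)\<^sup>2)"
  using norm_add_power2_le[of "a + b" "c + d"] norm_add_power2_le[of a b] norm_add_power2_le[of c d]
  by (simp add: add.assoc)

lemma norm_sum_power2_le:
  fixes f :: "'i \<Rightarrow> 'a::real_normed_vector"
  assumes "finite S"
  shows "(norm (\<Sum>i\<in>S. f i))\<^sup>2 \<le> real (card S) * (\<Sum>i\<in>S. (norm (f i))\<^sup>2)"
proof -
  have "(norm (\<Sum>i\<in>S. f i))\<^sup>2 \<le> (\<Sum>i\<in>S. norm (f i))\<^sup>2"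
    by (intro power_mono norm_sum) auto
  also have "\<dots> \<le> (\<Sum>i\<in>S. (norm (f i))\<^sup>2) * real (card S)"
    by (rule sum_squared_le_sum_of_squares)
  finally show ?thesis by (simp add: mult.commute)
qed

lemma norm_average_power2_le:
  fixes f :: "'i \<Rightarrow> 'a::real_normed_vector"
  assumes "finite S"
  shows "(norm ((1 / real (card S)) *\<^sub>R (\<Sum>i\<in>S. f i)))\<^sup>2 \<le> (1 / real (card S)) * (\<Sum>i\<in>S. (norm (f i))\<^sup>2)"
proof (cases "S = {}")
  case False
  then have n: "real (card S) > 0" using assms by (simp add: card_gt_0_iff)
  have "(norm ((1 / real (card S)) *\<^sub>R (\<Sum>i\<in>S. f i)))\<^sup>2 = (1 / real (card S))\<^sup>2 * (norm (\<Sum>i\<in>S. f i))\<^sup>2"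
    by (simp add: power_divide)
  also have "\<dots> \<le> (1 / real (card S))\<^sup>2 * (real (card S) * (\<Sum>i\<in>S. (norm (f i))\<^sup>2))"
    by (intro mult_left_mono norm_sum_power2_le assms) auto
  also have "\<dots> = (1 / real (card S)) * (\<Sum>i\<in>S. (norm (f i))\<^sup>2)"
    using n by (simp add: power2_eq_square)
  finally show ?thesis .
qed simp

lemma norm_average_diff_power2_le_lipschitz:
  fixes F :: "'i \<Rightarrow> 'a::real_normed_vector \<Rightarrow> 'b::real_normed_vector"
  assumes "finite S"
    and lip: "\<And>i u v. i \<in> S \<Longrightarrow> norm (F i u - F i v) \<le> L * norm (u - v)"
  shows "(norm ((1 / real (card S)) *\<^sub>R (\<Sum>i\<in>S. F i (u i) - F i (v i))))\<^sup>2
    \<le> L\<^sup>2 * ((1 / real (card S)) * (\<Sum>i\<in>S. (norm (u i - v i))\<^sup>2))"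
proof -
  have "(norm (F i (u i) - F i (v i)))\<^sup>2 \<le> L\<^sup>2 * (norm (u i - v i))\<^sup>2" if "i \<in> S" for i
    using power_mono[OF lip[OF that] norm_ge_zero] by (simp add: power_mult_distrib)
  then have "(1 / real (card S)) * (\<Sum>i\<in>S. (norm (F i (u i) - F i (v i)))\<^sup>2)
      \<le> (1 / real (card S)) * (\<Sum>i\<in>S. L\<^sup>2 * (norm (u i - v i))\<^sup>2)"
    by (intro mult_left_mono sum_mono) auto
  also have "\<dots> = L\<^sup>2 * ((1 / real (card S)) * (\<Sum>i\<in>S. (norm (u i - v i))\<^sup>2))"
    by (simp add: sum_distrib_left)
  finally show ?thesis
    using norm_average_power2_le[OF assms(1), of "\<lambda>i. F i (u i) - F i (v i)"] by linarith
qed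

lemma borel_measurable_lipschitz:
  fixes F :: "'a::real_normed_vector \<Rightarrow> 'b::real_normed_vector"
  assumes "\<And>x y. norm (F x - F y) \<le> L * norm (x - y)"
  shows "F \<in> borel_measurable borel"
proof -
  have "\<bar>L\<bar>-lipschitz_on UNIV F"
  proof (rule lipschitz_onI)
    fix x y
    have "norm (F x - F y) \<le> \<bar>L\<bar> * norm (x - y)"
      using assms[of x y] by (meson abs_ge_self mult_right_mono norm_ge_zero order_trans)
    then show "dist (F x) (F y) \<le> \<bar>L\<bar> * dist x y" by (simp add: dist_norm)
  qed auto
  then show ?thesis
    by (intro borel_measurable_continuous_onI lipschitz_on_continuous_on)
qed

definition square_integrable :: "'a measure \<Rightarrow> ('a \<Rightarrow> 'b::real_normed_vector) \<Rightarrow> bool" where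
  "square_integrable M f \<longleftrightarrow> f \<in> borel_measurable M \<and> integrable M (\<lambda>x. (norm (f x))\<^sup>2)"

lemma square_integrableD:
  "square_integrable M f \<Longrightarrow> f \<in> borel_measurable M"
  "square_integrable M f \<Longrightarrow> integrable M (\<lambda>x. (norm (f x))\<^sup>2)"
  unfolding square_integrable_def by auto

lemma (in finite_measure) square_integrable_const: "square_integrable M (\<lambda>_. c)"
  unfolding square_integrable_def by auto

lemma square_integrable_add:
  fixes f g :: "'a \<Rightarrow> 'b::{real_normed_vector, second_countable_topology}"
  assumes f: "square_integrable M f" and g: "square_integrable M g"
  shows "square_integrable M (\<lambda>x. f x + g x)"
proof -
  note [measurable] = square_integrableD(1)[OF f] square_integrableD(1)[OF g]
  have "integrable M (\<lambda>x. (norm (f x + g x))\<^sup>2)"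
  proof (rule Bochner_Integration.integrable_bound)
    show "integrable M (\<lambda>x. 2 * (norm (f x))\<^sup>2 + 2 * (norm (g x))\<^sup>2)"
      using square_integrableD(2)[OF f] square_integrableD(2)[OF g] by auto
    show "AE x in M. norm ((norm (f x + g x))\<^sup>2) \<le> norm (2 * (norm (f x))\<^sup>2 + 2 * (norm (g x))\<^sup>2)"
      using norm_add_power2_le by auto
  qed measurable
  moreover have "(\<lambda>x. f x + g x) \<in> borel_measurable M" by measurable
  ultimately show ?thesis unfolding square_integrable_def by simp
qed

lemma square_integrable_scaleR:
  fixes f :: "'a \<Rightarrow> 'b::{real_normed_vector, second_countable_topology}"
  shows "square_integrable M f \<Longrightarrow> square_integrable M (\<lambda>x. c *\<^sub>R f x)"
  unfolding square_integrable_def by (auto simp: power_mult_distrib)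

lemma (in finite_measure) square_integrable_sum:
  fixes f :: "'i \<Rightarrow> 'a \<Rightarrow> 'b::{real_normed_vector, second_countable_topology}"
  shows "(\<And>i. i \<in> I \<Longrightarrow> square_integrable M (f i)) \<Longrightarrow> square_integrable M (\<lambda>x. \<Sum>i\<in>I. f i x)"
proof (induction I rule: infinite_finite_induct)
  case (insert i I)
  then show ?case using square_integrable_add[of M "f i" "\<lambda>x. \<Sum>i\<in>I. f i x"] by simp
qed (auto intro: square_integrable_const[of 0, simplified])

lemma (in finite_measure) square_integrable_lipschitz_comp:
  fixes F :: "'b::real_normed_vector \<Rightarrow> 'c::{real_normed_vector, second_countable_topology}"
  assumes lip: "\<And>x y. norm (F x - F y) \<le> L * norm (x - y)" and f: "square_integrable M f"
  shows "square_integrable M (\<lambda>x. F (f x))"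
proof -
  have "square_integrable M (\<lambda>x. F (f x) - F 0)"
    unfolding square_integrable_def
  proof
    note [measurable] = square_integrableD(1)[OF f] borel_measurable_lipschitz[OF lip]
    show "(\<lambda>x. F (f x) - F 0) \<in> borel_measurable M" by measurable
    show "integrable M (\<lambda>x. (norm (F (f x) - F 0))\<^sup>2)"
    proof (rule Bochner_Integration.integrable_bound)
      show "integrable M (\<lambda>x. L\<^sup>2 * (norm (f x))\<^sup>2)"
        using square_integrableD(2)[OF f] by auto
      have "(norm (F (f x) - F 0))\<^sup>2 \<le> L\<^sup>2 * (norm (f x))\<^sup>2" for x
        using power_mono[OF lip[of "f x" 0] norm_ge_zero, of 2] by (simp add: power_mult_distrib)
      then show "AE x in M. norm ((norm (F (f x) - F 0))\<^sup>2) \<le> norm (L\<^sup>2 * (norm (f x))\<^sup>2)"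
        by simp
    qed measurable
  qed
  from square_integrable_add[OF this square_integrable_const[of "F 0"]] show ?thesis
    by simp
qed

section \<open>Sigma algebras generated by independent random variables\<close>

definition vars_sigma :: "'m measure \<Rightarrow> ('i \<Rightarrow> 's measure) \<Rightarrow> ('i \<Rightarrow> 'm \<Rightarrow> 's) \<Rightarrow> 'i set \<Rightarrow> 'm measure" where
  "vars_sigma M D X K = sigma (space M) (\<Union>k\<in>K. {X k -` A \<inter> space M | A. A \<in> sets (D k)})"

lemma
  shows space_vars_sigma [simp]: "space (vars_sigma M D X K) = space M"
    and sets_vars_sigma:
      "sets (vars_sigma M D X K) = sigma_sets (space M) (\<Union>k\<in>K. {X k -` A \<inter> space M | A. A \<in> sets (D k)})"
  unfolding vars_sigma_def by (auto intro!: space_measure_of sets_measure_of)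

lemma measurable_vars_sigma_mono:
  assumes "f \<in> vars_sigma M D X K \<rightarrow>\<^sub>M S" "K \<subseteq> K'"
  shows "f \<in> vars_sigma M D X K' \<rightarrow>\<^sub>M S"
proof -
  have "sets (vars_sigma M D X K) \<subseteq> sets (vars_sigma M D X K')"
    unfolding sets_vars_sigma using assms(2) by (intro sigma_sets_mono') auto
  then show ?thesis
    using assms(1) measurable_mono[of S S "vars_sigma M D X K" "vars_sigma M D X K'"] by auto
qed

lemma measurable_vars_sigma_var:
  assumes "k \<in> K" "X k \<in> M \<rightarrow>\<^sub>M D k"
  shows "X k \<in> vars_sigma M D X K \<rightarrow>\<^sub>M D k"
proof (rule measurableI)
  fix A assume "A \<in> sets (D k)"
  with assms(1) show "X k -` A \<inter> space (vars_sigma M D X K) \<in> sets (vars_sigma M D X K)"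
    unfolding sets_vars_sigma by (intro sigma_sets.Basic) auto
qed (use measurable_space[OF assms(2)] in simp)

lemma measurable_from_vars_sigma:
  assumes "\<And>k. k \<in> K \<Longrightarrow> X k \<in> M \<rightarrow>\<^sub>M D k" "f \<in> vars_sigma M D X K \<rightarrow>\<^sub>M S"
  shows "f \<in> M \<rightarrow>\<^sub>M S"
proof -
  have "(\<Union>k\<in>K. {X k -` A \<inter> space M | A. A \<in> sets (D k)}) \<subseteq> sets M"
    using assms(1) by (force intro: measurable_sets)
  then have "sets (vars_sigma M D X K) \<subseteq> sets M"
    unfolding sets_vars_sigma by (rule sets.sigma_sets_subset)
  then show ?thesis
    using assms(2) measurable_mono[of S S "vars_sigma M D X K" M] by auto
qed

context prob_space
begin

lemma indep_set_vars_sigma: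
  assumes indep: "indep_vars D X I" and K: "K \<subseteq> I" and k: "k \<in> I" "k \<notin> K"
  shows "indep_set (sets (vars_sigma M D X K)) (sets (vars_sigma M D X {k}))"
proof -
  define E where "E k = {X k -` A \<inter> space M | A. A \<in> sets (D k)}" for k
  have indep_E: "indep_sets E I"
    using indep unfolding indep_vars_def2 E_def by auto
  have "(\<Union>b. case_bool K {k} b) = K \<union> {k}"
    by (auto simp: UNIV_bool)
  then have "(\<Union>b. case_bool K {k} b) \<subseteq> I"
    using K k by simp
  note indep_Kk = indep_sets_mono_index[OF this indep_E]
  have Int_stable_E: "Int_stable (E k)" for k
  proof (rule Int_stableI)
    fix a b assume "a \<in> E k" "b \<in> E k"
    then obtain A B where "A \<in> sets (D k)" "B \<in> sets (D k)"
      and "a = X k -` A \<inter> space M" "b = X k -` B \<inter> space M"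
      unfolding E_def by blast
    then show "a \<inter> b \<in> E k"
      unfolding E_def by (intro CollectI exI[of _ "A \<inter> B"]) auto
  qed
  have "disjoint_family_on (case_bool K {k}) UNIV"
    using k by (auto simp: disjoint_family_on_def UNIV_bool)
  then have "indep_sets (\<lambda>b. sigma_sets (space M) (\<Union>i\<in>case_bool K {k} b. E i)) UNIV"
    by (rule indep_sets_collect_sigma[OF indep_Kk Int_stable_E])
  moreover have "(\<lambda>b. sigma_sets (space M) (\<Union>i\<in>case_bool K {k} b. E i))
      = case_bool (sets (vars_sigma M D X K)) (sets (vars_sigma M D X {k}))"
  proof
    fix b :: bool
    show "sigma_sets (space M) (\<Union>i\<in>case_bool K {k} b. E i)
        = case_bool (sets (vars_sigma M D X K)) (sets (vars_sigma M D X {k})) b"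
      by (cases b) (simp_all add: sets_vars_sigma E_def)
  qed
  ultimately show ?thesis
    unfolding indep_set_def by simp
qed

lemma nn_integral_vars_sigma_indep:
  assumes indep: "indep_vars D X I" and K: "K \<subseteq> I" and k: "k \<in> I" "k \<notin> K"
    and U: "U \<in> vars_sigma M D X K \<rightarrow>\<^sub>M S" and distr: "distr M (D k) (X k) = D k"
    and f: "f \<in> borel_measurable (S \<Otimes>\<^sub>M D k)"
  shows "(\<integral>\<^sup>+\<omega>. f (U \<omega>, X k \<omega>) \<partial>M) = (\<integral>\<^sup>+\<omega>. (\<integral>\<^sup>+s. f (U \<omega>, s) \<partial>D k) \<partial>M)"
proof -
  have rv: "\<And>k. k \<in> I \<Longrightarrow> random_variable (D k) (X k)"
    using indep unfolding indep_vars_def2 by auto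
  have UM: "random_variable S U"
    by (rule measurable_from_vars_sigma[OF _ U]) (use rv K in blast)
  have XM: "random_variable (D k) (X k)" using rv[OF k(1)] .
  have XY: "(\<lambda>\<omega>. (U \<omega>, X k \<omega>)) \<in> M \<rightarrow>\<^sub>M S \<Otimes>\<^sub>M D k"
    using UM XM by (rule measurable_Pair)
  interpret Dk: prob_space "D k"
    using prob_space_distr[OF XM] unfolding distr .
  interpret SU: prob_space "distr M S U" by (rule prob_space_distr[OF UM])
  have prod: "distr M S U \<Otimes>\<^sub>M D k = distr M (S \<Otimes>\<^sub>M D k) (\<lambda>\<omega>. (U \<omega>, X k \<omega>))"
  proof (rule pair_measure_eqI)
    show "sigma_finite_measure (distr M S U)" "sigma_finite_measure (D k)" ..
    show "sets (distr M S U \<Otimes>\<^sub>M D k) = sets (distr M (S \<Otimes>\<^sub>M D k) (\<lambda>\<omega>. (U \<omega>, X k \<omega>)))"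
      by (simp cong: sets_pair_measure_cong)
  next
    fix A B assume A: "A \<in> sets (distr M S U)" and B: "B \<in> sets (D k)"
    have "U -` A \<inter> space M \<in> sets (vars_sigma M D X K)"
      using measurable_sets[OF U] A by simp
    moreover have "X k -` B \<inter> space M \<in> sets (vars_sigma M D X {k})"
      using measurable_sets[OF measurable_vars_sigma_var[of k "{k}" X M D, OF singletonI XM] B] by simp
    ultimately have "prob ((U -` A \<inter> space M) \<inter> (X k -` B \<inter> space M))
        = prob (U -` A \<inter> space M) * prob (X k -` B \<inter> space M)"
      by (rule indep_setD[OF indep_set_vars_sigma[OF indep K k]])
    moreover have "(\<lambda>\<omega>. (U \<omega>, X k \<omega>)) -` (A \<times> B) \<inter> space M = (U -` A \<inter> space M) \<inter> (X k -` B \<inter> space M)"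
      by auto
    ultimately show "emeasure (distr M S U) A * emeasure (D k) B
        = emeasure (distr M (S \<Otimes>\<^sub>M D k) (\<lambda>\<omega>. (U \<omega>, X k \<omega>))) (A \<times> B)"
      using A B emeasure_distr[OF UM, of A] emeasure_distr[OF XM B] emeasure_distr[OF XY, of "A \<times> B"]
      by (simp add: distr emeasure_eq_measure ennreal_mult)
  qed
  have f': "f \<in> borel_measurable (distr M S U \<Otimes>\<^sub>M D k)"
    using f by (simp cong: measurable_cong_sets sets_pair_measure_cong)
  have "(\<integral>\<^sup>+\<omega>. f (U \<omega>, X k \<omega>) \<partial>M) = integral\<^sup>N (distr M (S \<Otimes>\<^sub>M D k) (\<lambda>\<omega>. (U \<omega>, X k \<omega>))) f"
    using XY f by (intro nn_integral_distr[symmetric]) auto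
  also have "\<dots> = (\<integral>\<^sup>+x. \<integral>\<^sup>+s. f (x, s) \<partial>D k \<partial>distr M S U)"
    unfolding prod[symmetric] by (rule Dk.nn_integral_fst[symmetric, OF f'])
  also have "\<dots> = (\<integral>\<^sup>+\<omega>. (\<integral>\<^sup>+s. f (U \<omega>, s) \<partial>D k) \<partial>M)"
    using Dk.borel_measurable_nn_integral_fst[OF f'] by (intro nn_integral_distr[OF UM]) simp
  finally show ?thesis .
qed

lemma nn_integral_norm_add_centered_power2_le:
  fixes f :: "'a \<Rightarrow> 'b::{real_inner, banach, second_countable_topology}"
  assumes "integrable M f" "(\<integral>x. f x \<partial>M) = 0"
    and "integrable M (\<lambda>x. (norm (f x))\<^sup>2)" "(\<integral>x. (norm (f x))\<^sup>2 \<partial>M) \<le> v"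
  shows "(\<integral>\<^sup>+x. ennreal ((norm (c + f x))\<^sup>2) \<partial>M) \<le> ennreal ((norm c)\<^sup>2 + v)"
proof -
  have expand: "(norm (c + f x))\<^sup>2 = (norm c)\<^sup>2 + 2 * (c \<bullet> f x) + (norm (f x))\<^sup>2" for x
    by (simp add: power2_norm_eq_inner inner_add_left inner_add_right inner_commute)
  have "integrable M (\<lambda>x. (norm (c + f x))\<^sup>2)"
    using assms(1,3) unfolding expand by auto
  then have "(\<integral>\<^sup>+x. ennreal ((norm (c + f x))\<^sup>2) \<partial>M) = ennreal (\<integral>x. (norm (c + f x))\<^sup>2 \<partial>M)"
    by (intro nn_integral_eq_integral) auto
  also have "(\<integral>x. (norm (c + f x))\<^sup>2 \<partial>M) = (norm c)\<^sup>2 + (\<integral>x. (norm (f x))\<^sup>2 \<partial>M)"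
    using assms(1-3) unfolding expand by (simp add: prob_space)
  also have "\<dots> \<le> (norm c)\<^sup>2 + v"
    using assms(4) by simp
  finally show ?thesis
    by (simp add: ennreal_leI)
qed

end

section \<open>One group round of MTGC\<close>

lemma mtgc_inner_Suc_fst:
  "fst (mtgc_inner g C H \<gamma> xi j t xb y (Suc e)) =
   (1 / real (card (C j))) *\<^sub>R (\<Sum>i\<in>C j. mtgc_local g \<gamma> i (xi i t e) (fst (mtgc_inner g C H \<gamma> xi j t xb y e))
      (snd (mtgc_inner g C H \<gamma> xi j t xb y e) i + y) H)"
  by (simp add: split_beta Let_def)

lemma mtgc_inner_Suc_snd:
  "snd (mtgc_inner g C H \<gamma> xi j t xb y (Suc e)) i =
   snd (mtgc_inner g C H \<gamma> xi j t xb y e) i + (1 / (real H * \<gamma>)) *\<^sub>R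
     (mtgc_local g \<gamma> i (xi i t e) (fst (mtgc_inner g C H \<gamma> xi j t xb y e)) (snd (mtgc_inner g C H \<gamma> xi j t xb y e) i + y) H
      - fst (mtgc_inner g C H \<gamma> xi j t xb y (Suc e)))"
  by (simp add: split_beta Let_def)

lemma mtgc_outer_Suc_fst:
  "fst (mtgc_outer g C N E H \<gamma> x0 xi (Suc t)) =
   (1 / real N) *\<^sub>R (\<Sum>j<N. fst (mtgc_inner g C H \<gamma> xi j t (fst (mtgc_outer g C N E H \<gamma> x0 xi t))
      (snd (mtgc_outer g C N E H \<gamma> x0 xi t) j) E))"
  by (simp add: split_beta Let_def)

lemma mtgc_outer_Suc_snd:
  "snd (mtgc_outer g C N E H \<gamma> x0 xi (Suc t)) j =
   snd (mtgc_outer g C N E H \<gamma> x0 xi t) j + (1 / (real H * real E * \<gamma>)) *\<^sub>R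
    (fst (mtgc_inner g C H \<gamma> xi j t (fst (mtgc_outer g C N E H \<gamma> x0 xi t)) (snd (mtgc_outer g C N E H \<gamma> x0 xi t) j) E)
     - fst (mtgc_outer g C N E H \<gamma> x0 xi (Suc t)))"
  by (simp add: split_beta Let_def)

lemma mtgc_local_eq_sum:
  "mtgc_local g \<gamma> i s x0 c h = x0 - \<gamma> *\<^sub>R (\<Sum>h'<h. g i (mtgc_local g \<gamma> i s x0 c h') (s h') + c)"
  by (induction h) (simp_all add: Let_def algebra_simps)

lemma sum_mtgc_inner_snd_eq_0:
  assumes "finite (C j)" "C j \<noteq> {}"
  shows "(\<Sum>i\<in>C j. snd (mtgc_inner g C H \<gamma> xi j t xb y e) i) = 0"
proof (induction e)
  case 0
  have "real (card (C j)) \<noteq> 0" using assms by simp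
  moreover have "(\<Sum>i\<in>C j. snd (mtgc_inner g C H \<gamma> xi j t xb y 0) i)
     = - (\<Sum>i\<in>C j. g i xb (xi i t 0 0))
       + real (card (C j)) *\<^sub>R ((1 / real (card (C j))) *\<^sub>R (\<Sum>i\<in>C j. g i xb (xi i t 0 0)))"
    by (simp only: mtgc_inner.simps snd_conv sum.distrib sum_negf sum_constant_scaleR)
  ultimately show ?case by simp
next
  case (Suc e)
  let ?xH = "\<lambda>i. mtgc_local g \<gamma> i (xi i t e) (fst (mtgc_inner g C H \<gamma> xi j t xb y e))
    (snd (mtgc_inner g C H \<gamma> xi j t xb y e) i + y) H"
  let ?m = "fst (mtgc_inner g C H \<gamma> xi j t xb y (Suc e))"
  let ?c = "1 / (real H * \<gamma>)"
  have "real (card (C j)) \<noteq> 0" using assms by simp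
  then have avg: "real (card (C j)) *\<^sub>R ?m = (\<Sum>i\<in>C j. ?xH i)"
    by (simp only: mtgc_inner_Suc_fst scaleR_scaleR) simp
  have "(\<Sum>i\<in>C j. snd (mtgc_inner g C H \<gamma> xi j t xb y (Suc e)) i)
      = (\<Sum>i\<in>C j. snd (mtgc_inner g C H \<gamma> xi j t xb y e) i + ?c *\<^sub>R (?xH i - ?m))"
    by (simp only: mtgc_inner_Suc_snd)
  also have "\<dots> = (\<Sum>i\<in>C j. snd (mtgc_inner g C H \<gamma> xi j t xb y e) i)
      + ?c *\<^sub>R ((\<Sum>i\<in>C j. ?xH i) - real (card (C j)) *\<^sub>R ?m)"
    by (simp add: sum.distrib scaleR_diff_right sum_subtractf sum_constant_scaleR scaleR_sum_right)
  finally show ?case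
    unfolding avg Suc by simp
qed

lemma average_local_updates_eq:
  fixes u :: "'i \<Rightarrow> 'a::real_vector" and H :: nat
  assumes S: "finite S" "S \<noteq> {}" and z: "(\<Sum>i\<in>S. z i) = 0"
    and u: "\<And>i. i \<in> S \<Longrightarrow> u i = x - \<gamma> *\<^sub>R (\<Sum>h<H. g i h + (z i + y))"
  shows "(1 / real (card S)) *\<^sub>R (\<Sum>i\<in>S. u i) - x =
    - \<gamma> *\<^sub>R ((1 / real (card S)) *\<^sub>R (\<Sum>h<H. \<Sum>i\<in>S. g i h - G i h)
      + (\<Sum>h<H. (1 / real (card S)) *\<^sub>R (\<Sum>i\<in>S. G i h) + y))"
proof -
  define n where "n = real (card S)"
  have n: "n \<noteq> 0" using S by (simp add: n_def)
  have "(\<Sum>h<H. g i h + (z i + y)) = (\<Sum>h<H. g i h) + real H *\<^sub>R z i + real H *\<^sub>R y" for i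
    by (simp add: sum.distrib scaleR_add_right sum_constant_scaleR)
  then have "(\<Sum>i\<in>S. u i) = (\<Sum>i\<in>S. x - \<gamma> *\<^sub>R ((\<Sum>h<H. g i h) + real H *\<^sub>R z i + real H *\<^sub>R y))"
    using u by simp
  also have "\<dots> = n *\<^sub>R x - \<gamma> *\<^sub>R ((\<Sum>i\<in>S. \<Sum>h<H. g i h) + real H *\<^sub>R (\<Sum>i\<in>S. z i) + (n * real H) *\<^sub>R y)"
    by (simp add: sum_subtractf sum.distrib scaleR_sum_right[symmetric] n_def sum_constant_scaleR scaleR_scaleR)
  also have "\<dots> = n *\<^sub>R x - \<gamma> *\<^sub>R ((\<Sum>h<H. \<Sum>i\<in>S. g i h) + (n * real H) *\<^sub>R y)"
    using z by (simp add: sum.swap[of _ S])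
  finally have sum_u: "(\<Sum>i\<in>S. u i) = \<dots>" .
  have split_G: "(\<Sum>h<H. \<Sum>i\<in>S. g i h - G i h) + (\<Sum>h<H. \<Sum>i\<in>S. G i h) = (\<Sum>h<H. \<Sum>i\<in>S. g i h)"
    by (simp add: sum_subtractf)
  have "- \<gamma> *\<^sub>R ((1 / n) *\<^sub>R (\<Sum>h<H. \<Sum>i\<in>S. g i h - G i h) + (\<Sum>h<H. (1 / n) *\<^sub>R (\<Sum>i\<in>S. G i h) + y))
     = - \<gamma> *\<^sub>R ((1 / n) *\<^sub>R ((\<Sum>h<H. \<Sum>i\<in>S. g i h - G i h) + (\<Sum>h<H. \<Sum>i\<in>S. G i h)) + real H *\<^sub>R y)"
    by (simp add: sum.distrib scaleR_sum_right[symmetric] scaleR_add_right sum_constant_scaleR)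
  also have "\<dots> = - \<gamma> *\<^sub>R ((1 / n) *\<^sub>R (\<Sum>h<H. \<Sum>i\<in>S. g i h) + real H *\<^sub>R y)"
    unfolding split_G ..
  also have "\<dots> = (1 / n) *\<^sub>R (n *\<^sub>R x - \<gamma> *\<^sub>R ((\<Sum>h<H. \<Sum>i\<in>S. g i h) + (n * real H) *\<^sub>R y)) - x"
    using n by (simp add: scaleR_add_right scaleR_diff_right algebra_simps)
  finally show ?thesis unfolding sum_u n_def[symmetric] by simp
qed

lemma mtgc_xbarj_Suc_minus:
  fixes g C N E H \<gamma> x0 xi j t e
  assumes "finite (C j)" "C j \<noteq> {}"
  defines "n \<equiv> real (card (C j))"
    and "x \<equiv> \<lambda>i h. mtgc_x g C N E H \<gamma> x0 xi j t e i h"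
  shows "mtgc_xbarj g C N E H \<gamma> x0 xi j t (Suc e) - mtgc_xbarj g C N E H \<gamma> x0 xi j t e =
    - \<gamma> *\<^sub>R ((1 / n) *\<^sub>R (\<Sum>h<H. \<Sum>i\<in>C j. g i (x i h) (xi i t e h) - G i (x i h))
      + (\<Sum>h<H. (1 / n) *\<^sub>R (\<Sum>i\<in>C j. G i (x i h)) + mtgc_y g C N E H \<gamma> x0 xi t j))"
proof -
  have avg: "mtgc_xbarj g C N E H \<gamma> x0 xi j t (Suc e) = (1 / n) *\<^sub>R (\<Sum>i\<in>C j. x i H)"
    unfolding x_def n_def mtgc_x_def mtgc_xbarj_def mtgc_z_def by (simp only: mtgc_inner_Suc_fst)
  have local: "x i H = mtgc_xbarj g C N E H \<gamma> x0 xi j t e - \<gamma> *\<^sub>R (\<Sum>h<H. g i (x i h) (xi i t e h)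
      + (mtgc_z g C N E H \<gamma> x0 xi j t e i + mtgc_y g C N E H \<gamma> x0 xi t j))" for i
    unfolding x_def mtgc_x_def by (rule mtgc_local_eq_sum)
  have "(\<Sum>i\<in>C j. mtgc_z g C N E H \<gamma> x0 xi j t e i) = 0"
    unfolding mtgc_z_def using assms(1,2) by (rule sum_mtgc_inner_snd_eq_0)
  from average_local_updates_eq[OF assms(1,2) this local] show ?thesis
    unfolding avg n_def .
qed

lemma norm_group_update_power2_le:
  fixes x :: "'i \<Rightarrow> nat \<Rightarrow> 'a::real_normed_vector" and G :: "'i \<Rightarrow> 'a \<Rightarrow> 'a"
  assumes S: "finite S" "S \<noteq> {}"
    and lip: "\<And>i u v. i \<in> S \<Longrightarrow> norm (G i u - G i v) \<le> L * norm (u - v)"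
  defines "n \<equiv> real (card S)"
  shows "(norm (\<gamma> *\<^sub>R ((1 / n) *\<^sub>R T + (\<Sum>h<H. (1 / n) *\<^sub>R (\<Sum>i\<in>S. G i (x i h)) + y))))\<^sup>2
    \<le> 2 * \<gamma>\<^sup>2 / n\<^sup>2 * (norm T)\<^sup>2
      + 8 * \<gamma>\<^sup>2 * real H * L\<^sup>2 * ((1 / n) * (\<Sum>i\<in>S. \<Sum>h<H. (norm (xb - x i h))\<^sup>2))
      + 8 * \<gamma>\<^sup>2 * (real H)\<^sup>2 * (L\<^sup>2 * (norm (xh - xb))\<^sup>2
          + (norm (y + (1 / n) *\<^sub>R (\<Sum>i\<in>S. G i xh) - v))\<^sup>2 + (norm v)\<^sup>2)"
proof -
  have n: "n > 0" unfolding n_def using S by (simp add: card_gt_0_iff)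
  define Q where "Q h = L\<^sup>2 * ((1 / n) * (\<Sum>i\<in>S. (norm (xb - x i h))\<^sup>2))" for h
  define R where "R = L\<^sup>2 * (norm (xh - xb))\<^sup>2 + (norm (y + (1 / n) *\<^sub>R (\<Sum>i\<in>S. G i xh) - v))\<^sup>2 + (norm v)\<^sup>2"
  define b where "b h = (1 / n) *\<^sub>R (\<Sum>i\<in>S. G i (x i h)) + y" for h
  have drift_x: "(norm ((1 / n) *\<^sub>R (\<Sum>i\<in>S. G i (x i h) - G i xb)))\<^sup>2 \<le> Q h" for h
    using norm_average_diff_power2_le_lipschitz[OF S(1) lip, where u="\<lambda>i. x i h" and v="\<lambda>_. xb"]
    by (simp add: Q_def n_def norm_minus_commute)
  have drift_hat: "(norm ((1 / n) *\<^sub>R (\<Sum>i\<in>S. G i xb - G i xh)))\<^sup>2 \<le> L\<^sup>2 * (norm (xh - xb))\<^sup>2"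
    using norm_average_diff_power2_le_lipschitz[OF S(1) lip, where u="\<lambda>_. xb" and v="\<lambda>_. xh"] n
    by (simp add: n_def norm_minus_commute)
  have b: "(norm (b h))\<^sup>2 \<le> 4 * (Q h + R)" for h
  proof -
    have "b h = (1 / n) *\<^sub>R (\<Sum>i\<in>S. G i (x i h) - G i xb) + (1 / n) *\<^sub>R (\<Sum>i\<in>S. G i xb - G i xh)
        + (y + (1 / n) *\<^sub>R (\<Sum>i\<in>S. G i xh) - v) + v"
      unfolding b_def by (simp add: sum_subtractf scaleR_diff_right algebra_simps)
    then have "(norm (b h))\<^sup>2 \<le> 4 * ((norm ((1 / n) *\<^sub>R (\<Sum>i\<in>S. G i (x i h) - G i xb)))\<^sup>2
        + (norm ((1 / n) *\<^sub>R (\<Sum>i\<in>S. G i xb - G i xh)))\<^sup>2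
        + (norm (y + (1 / n) *\<^sub>R (\<Sum>i\<in>S. G i xh) - v))\<^sup>2 + (norm v)\<^sup>2)"
      by (simp only: norm_add4_power2_le)
    also have "\<dots> \<le> 4 * (Q h + R)"
      using drift_x[of h] drift_hat unfolding R_def by simp
    finally show ?thesis .
  qed
  have sum_Q: "(\<Sum>h<H. Q h) = L\<^sup>2 * ((1 / n) * (\<Sum>i\<in>S. \<Sum>h<H. (norm (xb - x i h))\<^sup>2))"
  proof -
    have "(\<Sum>h<H. Q h) = L\<^sup>2 * ((1 / n) * (\<Sum>h<H. \<Sum>i\<in>S. (norm (xb - x i h))\<^sup>2))"
      unfolding Q_def by (simp add: sum_distrib_left)
    then show ?thesis
      by (simp only: sum.swap[of _ "{..<H}"])
  qed
  have "(norm (\<Sum>h<H. b h))\<^sup>2 \<le> real H * (\<Sum>h<H. (norm (b h))\<^sup>2)"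
    using norm_sum_power2_le[of "{..<H}" b] by simp
  also have "\<dots> \<le> real H * (\<Sum>h<H. 4 * (Q h + R))"
    by (intro mult_left_mono sum_mono b) auto
  also have "\<dots> = 4 * real H * (\<Sum>h<H. Q h) + 4 * (real H)\<^sup>2 * R"
    by (simp add: sum.distrib sum_distrib_left[symmetric] sum_distrib_right[symmetric]
        power2_eq_square algebra_simps)
  finally have drift: "(norm (\<Sum>h<H. b h))\<^sup>2
      \<le> 4 * real H * L\<^sup>2 * ((1 / n) * (\<Sum>i\<in>S. \<Sum>h<H. (norm (xb - x i h))\<^sup>2)) + 4 * (real H)\<^sup>2 * R"
    unfolding sum_Q by (simp add: mult.assoc)
  have "(norm (\<gamma> *\<^sub>R ((1 / n) *\<^sub>R T + (\<Sum>h<H. b h))))\<^sup>2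
      = \<gamma>\<^sup>2 * (norm ((1 / n) *\<^sub>R T + (\<Sum>h<H. b h)))\<^sup>2"
    by (simp add: power_mult_distrib)
  also have "\<dots> \<le> \<gamma>\<^sup>2 * (2 * (norm ((1 / n) *\<^sub>R T))\<^sup>2 + 2 * (norm (\<Sum>h<H. b h))\<^sup>2)"
    by (intro mult_left_mono norm_add_power2_le) auto
  also have "\<dots> \<le> \<gamma>\<^sup>2 * (2 * ((norm T)\<^sup>2 / n\<^sup>2)
      + 2 * (4 * real H * L\<^sup>2 * ((1 / n) * (\<Sum>i\<in>S. \<Sum>h<H. (norm (xb - x i h))\<^sup>2)) + 4 * (real H)\<^sup>2 * R))"
    using drift n by (intro mult_left_mono add_mono) (auto simp: power_mult_distrib power_divide)
  also have "\<dots> = 2 * \<gamma>\<^sup>2 / n\<^sup>2 * (norm T)\<^sup>2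
      + 8 * \<gamma>\<^sup>2 * real H * L\<^sup>2 * ((1 / n) * (\<Sum>i\<in>S. \<Sum>h<H. (norm (xb - x i h))\<^sup>2))
      + 8 * \<gamma>\<^sup>2 * (real H)\<^sup>2 * R"
    by (simp add: algebra_simps)
  finally show ?thesis
    unfolding b_def R_def .
qed

lemma norm_mtgc_xbarj_step_power2_le:
  fixes g C N E H \<gamma> x_init xi j t e
  assumes C: "finite (C j)" "C j \<noteq> {}"
    and lip: "\<And>i u v. i \<in> C j \<Longrightarrow> norm (G i u - G i v) \<le> L * norm (u - v)"
  defines "n \<equiv> real (card (C j))"
    and "xb \<equiv> mtgc_xbarj g C N E H \<gamma> x_init xi j t e"
    and "x \<equiv> \<lambda>i h. mtgc_x g C N E H \<gamma> x_init xi j t e i h"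
    and "y \<equiv> mtgc_y g C N E H \<gamma> x_init xi t j"
  shows "(norm (mtgc_xbarj g C N E H \<gamma> x_init xi j t (Suc e) - xb))\<^sup>2
    \<le> 2 * \<gamma>\<^sup>2 / n\<^sup>2 * (norm (\<Sum>h<H. \<Sum>i\<in>C j. g i (x i h) (xi i t e h) - G i (x i h)))\<^sup>2
      + 8 * \<gamma>\<^sup>2 * real H * L\<^sup>2 * ((1 / n) * (\<Sum>i\<in>C j. \<Sum>h<H. (norm (xb - x i h))\<^sup>2))
      + 8 * \<gamma>\<^sup>2 * (real H)\<^sup>2 * (L\<^sup>2 * (norm (xh - xb))\<^sup>2
          + (norm (y + (1 / n) *\<^sub>R (\<Sum>i\<in>C j. G i xh) - v))\<^sup>2 + (norm v)\<^sup>2)"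
  using norm_group_update_power2_le[OF C lip, where x=x and y=y and xb=xb and H=H and \<gamma>=\<gamma>
      and T="\<Sum>h<H. \<Sum>i\<in>C j. g i (x i h) (xi i t e h) - G i (x i h)"]
  unfolding xb_def mtgc_xbarj_Suc_minus[where C=C and j=j and G=G, OF C] n_def x_def y_def
  by simp

lemma sum_group_bounds_eq:
  fixes Q Dh Y :: "nat \<Rightarrow> nat \<Rightarrow> real" and G :: "nat \<Rightarrow> real" and n :: "nat \<Rightarrow> real" and H N E :: nat
  assumes N: "N \<ge> 1" and H: "H \<ge> 1"
  shows "(\<Sum>e<E. (1 / real N) * (\<Sum>j<N.
       8 * \<gamma>\<^sup>2 * real H * L\<^sup>2 * ((1 / n j) * Q e j)
     + 8 * \<gamma>\<^sup>2 * (real H)\<^sup>2 * L\<^sup>2 * Dh e j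
     + 8 * \<gamma>\<^sup>2 * (real H)\<^sup>2 * Y e j
     + 8 * \<gamma>\<^sup>2 * (real H)\<^sup>2 * G e
     + 2 * \<gamma>\<^sup>2 * real H * (1 / n j) * \<sigma>\<^sup>2))
   = 8 * \<gamma>\<^sup>2 * (real H)\<^sup>2 * L\<^sup>2 * (\<Sum>e<E. (1 / (real N * real H)) * (\<Sum>j<N. (1 / n j) * Q e j))
     + 8 * \<gamma>\<^sup>2 * (real H)\<^sup>2 * L\<^sup>2 * (\<Sum>e<E. (1 / real N) * (\<Sum>j<N. Dh e j))
     + 8 * \<gamma>\<^sup>2 * (real H)\<^sup>2 * (\<Sum>e<E. (1 / real N) * (\<Sum>j<N. Y e j))
     + 8 * \<gamma>\<^sup>2 * (real H)\<^sup>2 * (\<Sum>e<E. G e)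
     + 2 * \<gamma>\<^sup>2 * real E * real H * ((1 / real N) * (\<Sum>j<N. 1 / n j)) * \<sigma>\<^sup>2"
proof -
  have N0: "real N \<noteq> 0" and H0: "real H \<noteq> 0" using N H by auto
  have s: "(\<Sum>e<E. (1 / real N) * (\<Sum>j<N.
       8 * \<gamma>\<^sup>2 * real H * L\<^sup>2 * ((1 / n j) * Q e j)
     + 8 * \<gamma>\<^sup>2 * (real H)\<^sup>2 * L\<^sup>2 * Dh e j
     + 8 * \<gamma>\<^sup>2 * (real H)\<^sup>2 * Y e j
     + 8 * \<gamma>\<^sup>2 * (real H)\<^sup>2 * G e
     + 2 * \<gamma>\<^sup>2 * real H * (1 / n j) * \<sigma>\<^sup>2))
    = (\<Sum>e<E. (1 / real N) * (\<Sum>j<N. 8 * \<gamma>\<^sup>2 * real H * L\<^sup>2 * ((1 / n j) * Q e j)))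
    + (\<Sum>e<E. (1 / real N) * (\<Sum>j<N. 8 * \<gamma>\<^sup>2 * (real H)\<^sup>2 * L\<^sup>2 * Dh e j))
    + (\<Sum>e<E. (1 / real N) * (\<Sum>j<N. 8 * \<gamma>\<^sup>2 * (real H)\<^sup>2 * Y e j))
    + (\<Sum>e<E. (1 / real N) * (\<Sum>j<N. 8 * \<gamma>\<^sup>2 * (real H)\<^sup>2 * G e))
    + (\<Sum>e<E. (1 / real N) * (\<Sum>j<N. 2 * \<gamma>\<^sup>2 * real H * (1 / n j) * \<sigma>\<^sup>2))"
    by (simp only: sum.distrib distrib_left)
  have s1: "(\<Sum>e<E. (1 / real N) * (\<Sum>j<N. 8 * \<gamma>\<^sup>2 * real H * L\<^sup>2 * ((1 / n j) * Q e j)))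
     = 8 * \<gamma>\<^sup>2 * (real H)\<^sup>2 * L\<^sup>2 * (\<Sum>e<E. (1 / (real N * real H)) * (\<Sum>j<N. (1 / n j) * Q e j))"
    unfolding sum_distrib_left by (intro sum.cong refl) (simp add: power2_eq_square H0)
  have s2: "(\<Sum>e<E. (1 / real N) * (\<Sum>j<N. 8 * \<gamma>\<^sup>2 * (real H)\<^sup>2 * L\<^sup>2 * Dh e j))
     = 8 * \<gamma>\<^sup>2 * (real H)\<^sup>2 * L\<^sup>2 * (\<Sum>e<E. (1 / real N) * (\<Sum>j<N. Dh e j))"
    unfolding sum_distrib_left by (intro sum.cong refl) simp
  have s3: "(\<Sum>e<E. (1 / real N) * (\<Sum>j<N. 8 * \<gamma>\<^sup>2 * (real H)\<^sup>2 * Y e j))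
     = 8 * \<gamma>\<^sup>2 * (real H)\<^sup>2 * (\<Sum>e<E. (1 / real N) * (\<Sum>j<N. Y e j))"
    unfolding sum_distrib_left by (intro sum.cong refl) simp
  have s4: "(\<Sum>e<E. (1 / real N) * (\<Sum>j<N. 8 * \<gamma>\<^sup>2 * (real H)\<^sup>2 * G e))
     = 8 * \<gamma>\<^sup>2 * (real H)\<^sup>2 * (\<Sum>e<E. G e)"
    unfolding sum_distrib_left using N0 by (intro sum.cong refl) simp
  have s5: "(\<Sum>e<E. (1 / real N) * (\<Sum>j<N. 2 * \<gamma>\<^sup>2 * real H * (1 / n j) * \<sigma>\<^sup>2))
     = 2 * \<gamma>\<^sup>2 * real E * real H * ((1 / real N) * (\<Sum>j<N. 1 / n j)) * \<sigma>\<^sup>2"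
  proof -
    have "(\<Sum>j<N. 2 * \<gamma>\<^sup>2 * real H * (1 / n j) * \<sigma>\<^sup>2) = 2 * \<gamma>\<^sup>2 * real H * (\<Sum>j<N. 1 / n j) * \<sigma>\<^sup>2"
      by (simp add: sum_distrib_left sum_distrib_right)
    then show ?thesis by simp
  qed
  show ?thesis unfolding s s1 s2 s3 s4 s5 ..
qed

lemma sum_group_bounds_le:
  fixes \<Theta> Q Dh Y :: "nat \<Rightarrow> nat \<Rightarrow> real" and G n :: "nat \<Rightarrow> real" and H N E :: nat
  assumes N: "N \<ge> 1" and H: "H \<ge> 1"
    and bound: "\<And>e j. e < E \<Longrightarrow> j < N \<Longrightarrow> \<Theta> e j \<le>
       8 * \<gamma>\<^sup>2 * real H * L\<^sup>2 * ((1 / n j) * Q e j)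
     + 8 * \<gamma>\<^sup>2 * (real H)\<^sup>2 * L\<^sup>2 * Dh e j
     + 8 * \<gamma>\<^sup>2 * (real H)\<^sup>2 * Y e j
     + 8 * \<gamma>\<^sup>2 * (real H)\<^sup>2 * G e
     + 2 * \<gamma>\<^sup>2 * real H * (1 / n j) * \<sigma>\<^sup>2"
  shows "(\<Sum>e<E. (1 / real N) * (\<Sum>j<N. \<Theta> e j))
   \<le> 8 * \<gamma>\<^sup>2 * (real H)\<^sup>2 * L\<^sup>2 * (\<Sum>e<E. (1 / (real N * real H)) * (\<Sum>j<N. (1 / n j) * Q e j))
     + 8 * \<gamma>\<^sup>2 * (real H)\<^sup>2 * L\<^sup>2 * (\<Sum>e<E. (1 / real N) * (\<Sum>j<N. Dh e j))
     + 8 * \<gamma>\<^sup>2 * (real H)\<^sup>2 * (\<Sum>e<E. (1 / real N) * (\<Sum>j<N. Y e j))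
     + 8 * \<gamma>\<^sup>2 * (real H)\<^sup>2 * (\<Sum>e<E. G e)
     + 2 * \<gamma>\<^sup>2 * real E * real H * ((1 / real N) * (\<Sum>j<N. 1 / n j)) * \<sigma>\<^sup>2"
proof -
  have "(\<Sum>e<E. (1 / real N) * (\<Sum>j<N. \<Theta> e j)) \<le> (\<Sum>e<E. (1 / real N) * (\<Sum>j<N.
       8 * \<gamma>\<^sup>2 * real H * L\<^sup>2 * ((1 / n j) * Q e j)
     + 8 * \<gamma>\<^sup>2 * (real H)\<^sup>2 * L\<^sup>2 * Dh e j
     + 8 * \<gamma>\<^sup>2 * (real H)\<^sup>2 * Y e j
     + 8 * \<gamma>\<^sup>2 * (real H)\<^sup>2 * G e
     + 2 * \<gamma>\<^sup>2 * real H * (1 / n j) * \<sigma>\<^sup>2))"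
    using bound by (intro sum_mono mult_left_mono) auto
  then show ?thesis
    unfolding sum_group_bounds_eq[OF N H] .
qed

section \<open>The stochastic setting\<close>

locale mtgc_setup = prob_space M
  for M :: "'m measure" +
  fixes D :: "nat \<Rightarrow> 's measure"
    and gF :: "nat \<Rightarrow> 'a::euclidean_space \<Rightarrow> 's \<Rightarrow> 'a"
    and GF :: "nat \<Rightarrow> 'a \<Rightarrow> 'a"
    and C :: "nat \<Rightarrow> nat set"
    and N E H :: nat
    and L \<sigma> :: real
    and \<xi> :: "nat \<Rightarrow> nat \<Rightarrow> nat \<Rightarrow> nat \<Rightarrow> 'm \<Rightarrow> 's"
  assumes E: "E \<ge> 1" and H: "H \<ge> 1"
    and C_fin: "\<And>j. j < N \<Longrightarrow> finite (C j)"
    and C_ne: "\<And>j. j < N \<Longrightarrow> C j \<noteq> {}"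
    and D_prob: "\<And>j i. j < N \<Longrightarrow> i \<in> C j \<Longrightarrow> prob_space (D i)"
    and gF_meas: "\<And>j i. j < N \<Longrightarrow> i \<in> C j \<Longrightarrow>
        (\<lambda>p. gF i (fst p) (snd p)) \<in> borel_measurable (borel \<Otimes>\<^sub>M D i)"
    and A1: "\<And>j i x y. j < N \<Longrightarrow> i \<in> C j \<Longrightarrow> norm (GF i x - GF i y) \<le> L * norm (x - y)"
    and A2_int: "\<And>j i x. j < N \<Longrightarrow> i \<in> C j \<Longrightarrow> integrable (D i) (gF i x)"
    and A2_unbiased: "\<And>j i x. j < N \<Longrightarrow> i \<in> C j \<Longrightarrow> (\<integral>s. gF i x s \<partial>D i) = GF i x"
    and A2_var_int: "\<And>j i x. j < N \<Longrightarrow> i \<in> C j \<Longrightarrow>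
        integrable (D i) (\<lambda>s. (norm (gF i x s - GF i x))\<^sup>2)"
    and A2_var: "\<And>j i x. j < N \<Longrightarrow> i \<in> C j \<Longrightarrow>
        (\<integral>s. (norm (gF i x s - GF i x))\<^sup>2 \<partial>D i) \<le> \<sigma>\<^sup>2"
    and samples_distr: "\<And>j i t' e h. j < N \<Longrightarrow> i \<in> C j \<Longrightarrow> e < E \<Longrightarrow> h < H \<Longrightarrow>
        distr M (D i) (\<xi> i t' e h) = D i"
    and samples_indep: "indep_vars (\<lambda>(i, t', e, h). D i) (\<lambda>(i, t', e, h). \<xi> i t' e h)
        {(i, t', e, h). (\<exists>j<N. i \<in> C j) \<and> e < E \<and> h < H}"
begin

abbreviation sample_indices :: "(nat \<times> nat \<times> nat \<times> nat) set" where
  "sample_indices \<equiv> {(i, t', e, h). (\<exists>j<N. i \<in> C j) \<and> e < E \<and> h < H}"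

definition history :: "(nat \<times> nat \<times> nat \<times> nat) set \<Rightarrow> 'm measure" where
  "history K = vars_sigma M (\<lambda>(i, t', e, h). D i) (\<lambda>(i, t', e, h). \<xi> i t' e h) K"

definition past :: "nat \<Rightarrow> nat \<Rightarrow> nat \<Rightarrow> (nat \<times> nat \<times> nat \<times> nat) set" where
  "past t e h = {(i, t', e', h') \<in> sample_indices. t' < t \<or> t' = t \<and> (e' < e \<or> e' = e \<and> h' < h)}"

text \<open>Bochner integrals of non-integrable functions are 0, so every iterate is shown to be
  square-integrable; measurability with respect to the earlier samples is what makes the next
  sample independent of it.\<close>

definition history_L2 :: "(nat \<times> nat \<times> nat \<times> nat) set \<Rightarrow> ('m \<Rightarrow> 'a) \<Rightarrow> bool" where
  "history_L2 K f \<longleftrightarrow> f \<in> borel_measurable (history K) \<and> square_integrable M f"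

lemma past_subset_sample_indices: "past t e h \<subseteq> sample_indices"
  unfolding past_def by auto

lemma past_mono: "t < t' \<or> t = t' \<and> (e < e' \<or> e = e' \<and> h \<le> h') \<Longrightarrow> past t e h \<subseteq> past t' e' h'"
  unfolding past_def by auto

lemma past_Suc: "(i, t, e, h) \<in> sample_indices \<Longrightarrow> insert (i, t, e, h) (past t e h) \<subseteq> past t e (Suc h)"
  unfolding past_def by auto

lemma not_in_past: "(i, t, e, h) \<notin> past t e h"
  unfolding past_def by simp

lemma measurable_sample:
  "k \<in> sample_indices \<Longrightarrow> (\<lambda>(i, t', e, h). \<xi> i t' e h) k \<in> M \<rightarrow>\<^sub>M (\<lambda>(i, t', e, h). D i) k"
  using samples_indep unfolding indep_vars_def2 by blast

lemma measurable_from_history: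
  assumes "K \<subseteq> sample_indices" "f \<in> history K \<rightarrow>\<^sub>M S"
  shows "f \<in> M \<rightarrow>\<^sub>M S"
  by (rule measurable_from_vars_sigma[OF _ assms(2)[unfolded history_def]])
    (use assms(1) measurable_sample in blast)

lemma measurable_history_mono: "f \<in> history K \<rightarrow>\<^sub>M S \<Longrightarrow> K \<subseteq> K' \<Longrightarrow> f \<in> history K' \<rightarrow>\<^sub>M S"
  unfolding history_def by (rule measurable_vars_sigma_mono)

lemma measurable_history_sample:
  assumes "(i, t, e, h) \<in> K" "K \<subseteq> sample_indices"
  shows "\<xi> i t e h \<in> history K \<rightarrow>\<^sub>M D i"
proof -
  have "(\<lambda>(i, t', e, h). \<xi> i t' e h) (i, t, e, h) \<in> history K \<rightarrow>\<^sub>M (\<lambda>(i, t', e, h). D i) (i, t, e, h)"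
    unfolding history_def using assms by (intro measurable_vars_sigma_var measurable_sample) auto
  then show ?thesis by simp
qed

lemma borel_measurable_GF[measurable]:
  assumes "j < N" "i \<in> C j"
  shows "GF i \<in> borel_measurable borel"
  using A1[OF assms] by (rule borel_measurable_lipschitz)

lemma measurable_history_gF:
  assumes "j < N" "i \<in> C j" "(i, t, e, h) \<in> K" "K \<subseteq> sample_indices"
    and "X \<in> borel_measurable (history K)"
  shows "(\<lambda>\<omega>. gF i (X \<omega>) (\<xi> i t e h \<omega>)) \<in> borel_measurable (history K)"
  using measurable_compose[OF measurable_Pair[OF assms(5) measurable_history_sample[OF assms(3,4)]]
      gF_meas[OF assms(1,2)]]
  by simp

lemma history_L2_const: "history_L2 K (\<lambda>_. c)"
  unfolding history_L2_def by (simp add: square_integrable_const)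

lemma history_L2_add:
  assumes "history_L2 K f" "history_L2 K g"
  shows "history_L2 K (\<lambda>\<omega>. f \<omega> + g \<omega>)"
  using assms borel_measurable_add[of f "history K" g] square_integrable_add[of M f g]
  unfolding history_L2_def by simp

lemma history_L2_scaleR:
  assumes "history_L2 K f"
  shows "history_L2 K (\<lambda>\<omega>. c *\<^sub>R f \<omega>)"
  using assms borel_measurable_scaleR[of "\<lambda>_. c" "history K" f] square_integrable_scaleR[of M f c]
  unfolding history_L2_def by simp

lemma history_L2_uminus: "history_L2 K f \<Longrightarrow> history_L2 K (\<lambda>\<omega>. - f \<omega>)"
  using history_L2_scaleR[of K f "-1"] by simp

lemma history_L2_diff:
  assumes "history_L2 K f" "history_L2 K g"
  shows "history_L2 K (\<lambda>\<omega>. f \<omega> - g \<omega>)"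
  using history_L2_add[OF assms(1) history_L2_scaleR[OF assms(2), of "-1"]] by simp

lemma history_L2_sum:
  assumes "\<And>i. i \<in> I \<Longrightarrow> history_L2 K (f i)"
  shows "history_L2 K (\<lambda>\<omega>. \<Sum>i\<in>I. f i \<omega>)"
  using assms borel_measurable_sum[of I f "history K"] square_integrable_sum[of I f]
  unfolding history_L2_def by simp

lemma history_L2_mono:
  assumes "history_L2 K f" "K \<subseteq> K'"
  shows "history_L2 K' f"
  using assms(1) unfolding history_L2_def
  by (auto intro: measurable_history_mono[OF _ assms(2)])

lemma history_L2_past_mono:
  "history_L2 (past t e h) f \<Longrightarrow> t < t' \<or> t = t' \<and> (e < e' \<or> e = e' \<and> h \<le> h') \<Longrightarrow>
    history_L2 (past t' e' h') f"
  by (erule history_L2_mono) (rule past_mono)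

lemma history_L2_GF:
  assumes "j < N" "i \<in> C j" "history_L2 K X"
  shows "history_L2 K (\<lambda>\<omega>. GF i (X \<omega>))"
proof -
  have "(\<lambda>\<omega>. GF i (X \<omega>)) \<in> borel_measurable (history K)"
    using measurable_compose[of X "history K" borel "GF i"] assms(3) borel_measurable_GF[OF assms(1,2)]
    unfolding history_L2_def by (simp add: comp_def)
  moreover have "square_integrable M (\<lambda>\<omega>. GF i (X \<omega>))"
    using assms(3) unfolding history_L2_def
    by (intro square_integrable_lipschitz_comp[OF A1[OF assms(1,2)]]) simp
  ultimately show ?thesis unfolding history_L2_def ..
qed

lemma gF_noise_centered:
  assumes "j < N" "i \<in> C j"
  shows "integrable (D i) (\<lambda>s. gF i x s - GF i x)" "(\<integral>s. gF i x s - GF i x \<partial>D i) = 0"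
proof -
  interpret Di: prob_space "D i" using D_prob[OF assms] .
  show "integrable (D i) (\<lambda>s. gF i x s - GF i x)"
    using A2_int[OF assms] by simp
  then show "(\<integral>s. gF i x s - GF i x \<partial>D i) = 0"
    using A2_int[OF assms] A2_unbiased[OF assms] by (simp add: Di.prob_space)
qed

text \<open>The sample with index (i, t, e, h) is independent of everything determined by the
  samples in K, so conditionally on them the gradient noise it produces is centred with second
  moment at most sigma squared.\<close>

lemma nn_integral_noise_power2_le:
  assumes j: "j < N" "i \<in> C j"
    and K: "K \<subseteq> sample_indices" "(i, t, e, h) \<in> sample_indices" "(i, t, e, h) \<notin> K"
    and A: "A \<in> borel_measurable (history K)" and X: "X \<in> borel_measurable (history K)"
  shows "(\<integral>\<^sup>+\<omega>. ennreal ((norm (A \<omega> + (gF i (X \<omega>) (\<xi> i t e h \<omega>) - GF i (X \<omega>))))\<^sup>2) \<partial>M)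
    \<le> (\<integral>\<^sup>+\<omega>. ennreal ((norm (A \<omega>))\<^sup>2) \<partial>M) + ennreal (\<sigma>\<^sup>2)"
proof -
  interpret Di: prob_space "D i" using D_prob[OF j] .
  have distr: "distr M (D i) (\<xi> i t e h) = D i"
    using K(2) samples_distr[OF j] by auto
  have "(\<lambda>p. (snd (fst p), snd p)) \<in> ((borel \<Otimes>\<^sub>M borel) \<Otimes>\<^sub>M D i) \<rightarrow>\<^sub>M (borel \<Otimes>\<^sub>M D i)"
    by measurable
  from measurable_compose[OF this gF_meas[OF j]]
  have [measurable]: "(\<lambda>p. gF i (snd (fst p)) (snd p)) \<in> borel_measurable ((borel \<Otimes>\<^sub>M (borel :: 'a measure)) \<Otimes>\<^sub>M D i)"
    by simp
  note borel_measurable_GF[OF j, measurable]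
  define f where "f p = ennreal ((norm (fst (fst p) + (gF i (snd (fst p)) (snd p) - GF i (snd (fst p)))))\<^sup>2)"
    for p :: "('a \<times> 'a) \<times> 's"
  have f: "f \<in> borel_measurable ((borel \<Otimes>\<^sub>M borel) \<Otimes>\<^sub>M D i)"
    unfolding f_def by measurable
  from nn_integral_vars_sigma_indep[OF samples_indep K measurable_Pair[OF A X, unfolded history_def], unfolded prod.case, OF distr f]
  have "(\<integral>\<^sup>+\<omega>. ennreal ((norm (A \<omega> + (gF i (X \<omega>) (\<xi> i t e h \<omega>) - GF i (X \<omega>))))\<^sup>2) \<partial>M)
      = (\<integral>\<^sup>+\<omega>. (\<integral>\<^sup>+s. ennreal ((norm (A \<omega> + (gF i (X \<omega>) s - GF i (X \<omega>))))\<^sup>2) \<partial>D i) \<partial>M)"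
    by (simp only: f_def fst_conv snd_conv)
  also have "\<dots> \<le> (\<integral>\<^sup>+\<omega>. ennreal ((norm (A \<omega>))\<^sup>2) + ennreal (\<sigma>\<^sup>2) \<partial>M)"
  proof (rule nn_integral_mono)
    fix \<omega>
    have "(\<integral>\<^sup>+s. ennreal ((norm (A \<omega> + (gF i (X \<omega>) s - GF i (X \<omega>))))\<^sup>2) \<partial>D i)
        \<le> ennreal ((norm (A \<omega>))\<^sup>2 + \<sigma>\<^sup>2)"
      using gF_noise_centered[OF j] A2_var_int[OF j] A2_var[OF j]
      by (rule Di.nn_integral_norm_add_centered_power2_le)
    then show "(\<integral>\<^sup>+s. ennreal ((norm (A \<omega> + (gF i (X \<omega>) s - GF i (X \<omega>))))\<^sup>2) \<partial>D i)
        \<le> ennreal ((norm (A \<omega>))\<^sup>2) + ennreal (\<sigma>\<^sup>2)"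
      by (simp add: ennreal_plus)
  qed
  also have "\<dots> = (\<integral>\<^sup>+\<omega>. ennreal ((norm (A \<omega>))\<^sup>2) \<partial>M) + ennreal (\<sigma>\<^sup>2)"
  proof -
    have [measurable]: "A \<in> borel_measurable M"
      by (rule measurable_from_history[OF K(1) A])
    show ?thesis
      by (subst nn_integral_add) (auto simp: emeasure_space_1)
  qed
  finally show ?thesis .
qed

lemma history_L2_gF:
  assumes j: "j < N" "i \<in> C j" and eh: "e < E" "h < H" and X: "history_L2 (past t e h) X"
  shows "history_L2 (past t e (Suc h)) (\<lambda>\<omega>. gF i (X \<omega>) (\<xi> i t e h \<omega>))"
proof -
  have k: "(i, t, e, h) \<in> sample_indices" using j eh by auto
  have "history_L2 (past t e (Suc h)) X"
    using X past_mono[where t'=t and e'=e and h'="Suc h"] by (simp add: history_L2_mono)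
  then have "(\<lambda>\<omega>. gF i (X \<omega>) (\<xi> i t e h \<omega>)) \<in> borel_measurable (history (past t e (Suc h)))"
    using past_Suc[OF k] past_subset_sample_indices unfolding history_L2_def
    by (intro measurable_history_gF[OF j]) auto
  note meas = this
  then have meas_M [measurable]: "(\<lambda>\<omega>. gF i (X \<omega>) (\<xi> i t e h \<omega>)) \<in> borel_measurable M"
    by (rule measurable_from_history[OF past_subset_sample_indices])
  have GF_X: "history_L2 (past t e h) (\<lambda>\<omega>. GF i (X \<omega>))"
    by (rule history_L2_GF[OF j X])
  have "(\<integral>\<^sup>+\<omega>. ennreal ((norm (gF i (X \<omega>) (\<xi> i t e h \<omega>)))\<^sup>2) \<partial>M)
      \<le> (\<integral>\<^sup>+\<omega>. ennreal ((norm (GF i (X \<omega>)))\<^sup>2) \<partial>M) + ennreal (\<sigma>\<^sup>2)"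
    using nn_integral_noise_power2_le[OF j past_subset_sample_indices k not_in_past,
        of "\<lambda>\<omega>. GF i (X \<omega>)" X] GF_X X
    unfolding history_L2_def by simp
  also have "\<dots> < \<infinity>"
    using square_integrableD(2)[of M "\<lambda>\<omega>. GF i (X \<omega>)"] GF_X unfolding history_L2_def
    by (simp add: nn_integral_eq_integral)
  finally have "integrable M (\<lambda>\<omega>. (norm (gF i (X \<omega>) (\<xi> i t e h \<omega>)))\<^sup>2)"
    by (intro integrableI_nonneg) auto
  with meas meas_M show ?thesis
    unfolding history_L2_def square_integrable_def by simp
qed

lemma history_L2_mtgc_local:
  assumes j: "j < N" "i \<in> C j" and e: "e < E"
    and x0: "history_L2 (past t e 0) x0" and c: "history_L2 (past t e 1) c"
  shows "h \<le> H \<Longrightarrow> history_L2 (past t e h) (\<lambda>\<omega>. mtgc_local gF \<gamma> i (sample_path \<xi> \<omega> i t e) (x0 \<omega>) (c \<omega>) h)"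
proof (induction h)
  case 0
  then show ?case using x0 by simp
next
  case (Suc h)
  let ?x = "\<lambda>\<omega>. mtgc_local gF \<gamma> i (sample_path \<xi> \<omega> i t e) (x0 \<omega>) (c \<omega>) h"
  have "h < H" using Suc by simp
  have x: "history_L2 (past t e h) ?x" using Suc by simp
  have "history_L2 (past t e (Suc h)) ?x" "history_L2 (past t e (Suc h)) c"
    by (rule history_L2_past_mono[OF x], simp, rule history_L2_past_mono[OF c], simp)
  with history_L2_gF[OF j e \<open>h < H\<close> x]
  have "history_L2 (past t e (Suc h)) (\<lambda>\<omega>. ?x \<omega> - \<gamma> *\<^sub>R (gF i (?x \<omega>) (\<xi> i t e h \<omega>) + c \<omega>))"
    by (intro history_L2_diff history_L2_scaleR history_L2_add)
  then show ?case by (simp add: Let_def sample_path_def)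
qed

lemma history_L2_mtgc_inner:
  assumes j: "j < N" and xb: "history_L2 (past t 0 0) xb" and y: "history_L2 (past t 0 1) y"
  shows "e \<le> E \<Longrightarrow>
    history_L2 (past t e 0) (\<lambda>\<omega>. fst (mtgc_inner gF C H \<gamma> (sample_path \<xi> \<omega>) j t (xb \<omega>) (y \<omega>) e)) \<and>
    (\<forall>i\<in>C j. history_L2 (past t e 1) (\<lambda>\<omega>. snd (mtgc_inner gF C H \<gamma> (sample_path \<xi> \<omega>) j t (xb \<omega>) (y \<omega>) e) i))"
proof (induction e)
  case 0
  have "0 < E" "0 < H" using E H by auto
  then have "history_L2 (past t 0 1) (\<lambda>\<omega>. gF i (xb \<omega>) (\<xi> i t 0 0 \<omega>))" if "i \<in> C j" for i
    using history_L2_gF[OF j that _ _ xb] by simp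
  then have "history_L2 (past t 0 1) (\<lambda>\<omega>. - gF i (xb \<omega>) (\<xi> i t 0 0 \<omega>)
      + (1 / real (card (C j))) *\<^sub>R (\<Sum>i'\<in>C j. gF i' (xb \<omega>) (\<xi> i' t 0 0 \<omega>)))" if "i \<in> C j" for i
    using that by (intro history_L2_add history_L2_uminus history_L2_scaleR history_L2_sum) auto
  then show ?case using xb by (simp add: sample_path_def)
next
  case (Suc e)
  let ?inner = "\<lambda>\<omega>. mtgc_inner gF C H \<gamma> (sample_path \<xi> \<omega>) j t (xb \<omega>) (y \<omega>) e"
  let ?xH = "\<lambda>i \<omega>. mtgc_local gF \<gamma> i (sample_path \<xi> \<omega> i t e) (fst (?inner \<omega>)) (snd (?inner \<omega>) i + y \<omega>) H"
  have "e < E" using Suc by simp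
  have xbar: "history_L2 (past t e 0) (\<lambda>\<omega>. fst (?inner \<omega>))"
    and z: "\<And>i. i \<in> C j \<Longrightarrow> history_L2 (past t e 1) (\<lambda>\<omega>. snd (?inner \<omega>) i)"
    using Suc by auto
  have xH: "history_L2 (past t (Suc e) 0) (?xH i)" if i: "i \<in> C j" for i
  proof -
    have "history_L2 (past t e 1) y"
      by (rule history_L2_past_mono[OF y]) auto
    with z[OF i] have "history_L2 (past t e 1) (\<lambda>\<omega>. snd (?inner \<omega>) i + y \<omega>)"
      by (rule history_L2_add)
    from history_L2_mtgc_local[OF j i \<open>e < E\<close> xbar this order.refl]
    show ?thesis
      by (rule history_L2_past_mono) simp
  qed
  have xbar': "history_L2 (past t (Suc e) 0)
      (\<lambda>\<omega>. fst (mtgc_inner gF C H \<gamma> (sample_path \<xi> \<omega>) j t (xb \<omega>) (y \<omega>) (Suc e)))"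
    unfolding mtgc_inner_Suc_fst by (intro history_L2_scaleR history_L2_sum xH)
  have "history_L2 (past t (Suc e) 1)
      (\<lambda>\<omega>. snd (mtgc_inner gF C H \<gamma> (sample_path \<xi> \<omega>) j t (xb \<omega>) (y \<omega>) (Suc e)) i)" if i: "i \<in> C j" for i
  proof -
    have "history_L2 (past t (Suc e) 0) (\<lambda>\<omega>. snd (?inner \<omega>) i)"
      by (rule history_L2_past_mono[OF z[OF i]]) simp
    then have "history_L2 (past t (Suc e) 0)
        (\<lambda>\<omega>. snd (mtgc_inner gF C H \<gamma> (sample_path \<xi> \<omega>) j t (xb \<omega>) (y \<omega>) (Suc e)) i)"
      unfolding mtgc_inner_Suc_snd by (intro history_L2_add history_L2_scaleR history_L2_diff xH[OF i] xbar')
    then show ?thesis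
      by (rule history_L2_past_mono) simp
  qed
  with xbar' show ?case by blast
qed

lemma history_L2_mtgc_outer:
  "history_L2 (past t 0 0) (\<lambda>\<omega>. fst (mtgc_outer gF C N E H \<gamma> x0 (sample_path \<xi> \<omega>) t)) \<and>
   (\<forall>j<N. history_L2 (past t 0 1) (\<lambda>\<omega>. snd (mtgc_outer gF C N E H \<gamma> x0 (sample_path \<xi> \<omega>) t) j))"
proof (induction t)
  case 0
  have "0 < E" "0 < H" using E H by auto
  then have "history_L2 (past 0 0 1) (\<lambda>\<omega>. gF i x0 (\<xi> i 0 0 0 \<omega>))" if "j < N" "i \<in> C j" for j i
    using history_L2_gF[OF that _ _ history_L2_const] by simp
  then have "history_L2 (past 0 0 1) (\<lambda>\<omega>. - (1 / real (card (C j))) *\<^sub>R (\<Sum>i\<in>C j. gF i x0 (\<xi> i 0 0 0 \<omega>))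
      + (1 / real N) *\<^sub>R (\<Sum>j'<N. (1 / real (card (C j'))) *\<^sub>R (\<Sum>i\<in>C j'. gF i x0 (\<xi> i 0 0 0 \<omega>))))"
    if "j < N" for j
    using that by (intro history_L2_add history_L2_uminus history_L2_scaleR history_L2_sum) auto
  then show ?case using history_L2_const by (simp add: sample_path_def)
next
  case (Suc t)
  let ?xb = "\<lambda>\<omega>. fst (mtgc_outer gF C N E H \<gamma> x0 (sample_path \<xi> \<omega>) t)"
  let ?y = "\<lambda>\<omega>. snd (mtgc_outer gF C N E H \<gamma> x0 (sample_path \<xi> \<omega>) t)"
  let ?xE = "\<lambda>j \<omega>. fst (mtgc_inner gF C H \<gamma> (sample_path \<xi> \<omega>) j t (?xb \<omega>) (?y \<omega> j) E)"
  have xb: "history_L2 (past t 0 0) ?xb" and y: "\<And>j. j < N \<Longrightarrow> history_L2 (past t 0 1) (\<lambda>\<omega>. ?y \<omega> j)"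
    using Suc by auto
  have xE: "history_L2 (past (Suc t) 0 0) (?xE j)" if j: "j < N" for j
  proof -
    have "history_L2 (past t E 0) (?xE j)"
      using history_L2_mtgc_inner[where \<gamma>=\<gamma> and e=E, OF j xb y[OF j]] by simp
    then show ?thesis
      by (rule history_L2_past_mono) simp
  qed
  have xb': "history_L2 (past (Suc t) 0 0) (\<lambda>\<omega>. fst (mtgc_outer gF C N E H \<gamma> x0 (sample_path \<xi> \<omega>) (Suc t)))"
    unfolding mtgc_outer_Suc_fst by (intro history_L2_scaleR history_L2_sum xE) simp
  have "history_L2 (past (Suc t) 0 1) (\<lambda>\<omega>. snd (mtgc_outer gF C N E H \<gamma> x0 (sample_path \<xi> \<omega>) (Suc t)) j)"
    if j: "j < N" for j
  proof -
    have "history_L2 (past (Suc t) 0 0) (\<lambda>\<omega>. ?y \<omega> j)"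
      by (rule history_L2_past_mono[OF y[OF j]]) simp
    then have "history_L2 (past (Suc t) 0 0)
        (\<lambda>\<omega>. snd (mtgc_outer gF C N E H \<gamma> x0 (sample_path \<xi> \<omega>) (Suc t)) j)"
      unfolding mtgc_outer_Suc_snd by (intro history_L2_add history_L2_scaleR history_L2_diff xE[OF j] xb')
    then show ?thesis
      by (rule history_L2_past_mono) simp
  qed
  with xb' show ?case by blast
qed

lemma history_L2_mtgc_iterates:
  assumes j: "j < N"
  shows history_L2_mtgc_y: "history_L2 (past t 0 1) (\<lambda>\<omega>. mtgc_y gF C N E H \<gamma> x0 (sample_path \<xi> \<omega>) t j)"
    and history_L2_mtgc_xbarj: "e \<le> E \<Longrightarrow>
      history_L2 (past t e 0) (\<lambda>\<omega>. mtgc_xbarj gF C N E H \<gamma> x0 (sample_path \<xi> \<omega>) j t e)"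
    and history_L2_mtgc_x: "e < E \<Longrightarrow> i \<in> C j \<Longrightarrow> h \<le> H \<Longrightarrow>
      history_L2 (past t e h) (\<lambda>\<omega>. mtgc_x gF C N E H \<gamma> x0 (sample_path \<xi> \<omega>) j t e i h)"
proof -
  have xb: "history_L2 (past t 0 0) (\<lambda>\<omega>. mtgc_xbar gF C N E H \<gamma> x0 (sample_path \<xi> \<omega>) t)"
    and y: "history_L2 (past t 0 1) (\<lambda>\<omega>. mtgc_y gF C N E H \<gamma> x0 (sample_path \<xi> \<omega>) t j)"
    using history_L2_mtgc_outer[where \<gamma>=\<gamma> and t=t] j unfolding mtgc_xbar_def mtgc_y_def by auto
  note inner = history_L2_mtgc_inner[where \<gamma>=\<gamma>, OF j xb y, unfolded mtgc_xbarj_def[symmetric] mtgc_z_def[symmetric]]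
  show "history_L2 (past t 0 1) (\<lambda>\<omega>. mtgc_y gF C N E H \<gamma> x0 (sample_path \<xi> \<omega>) t j)" by (rule y)
  show xbarj: "history_L2 (past t e 0) (\<lambda>\<omega>. mtgc_xbarj gF C N E H \<gamma> x0 (sample_path \<xi> \<omega>) j t e)"
    if "e \<le> E" for e
    using inner[OF that] by blast
  have z: "history_L2 (past t e 1) (\<lambda>\<omega>. mtgc_z gF C N E H \<gamma> x0 (sample_path \<xi> \<omega>) j t e i)"
    if "e \<le> E" "i \<in> C j" for e i
    using inner[OF that(1)] that(2) by blast
  show "history_L2 (past t e h) (\<lambda>\<omega>. mtgc_x gF C N E H \<gamma> x0 (sample_path \<xi> \<omega>) j t e i h)"
    if "e < E" "i \<in> C j" "h \<le> H"
  proof -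
    have "history_L2 (past t e 1)
        (\<lambda>\<omega>. mtgc_z gF C N E H \<gamma> x0 (sample_path \<xi> \<omega>) j t e i + mtgc_y gF C N E H \<gamma> x0 (sample_path \<xi> \<omega>) t j)"
    proof (rule history_L2_add)
      show "history_L2 (past t e 1) (\<lambda>\<omega>. mtgc_z gF C N E H \<gamma> x0 (sample_path \<xi> \<omega>) j t e i)"
        using that by (intro z) auto
      show "history_L2 (past t e 1) (\<lambda>\<omega>. mtgc_y gF C N E H \<gamma> x0 (sample_path \<xi> \<omega>) t j)"
        by (rule history_L2_past_mono[OF y]) auto
    qed
    moreover have "history_L2 (past t e 0) (\<lambda>\<omega>. mtgc_xbarj gF C N E H \<gamma> x0 (sample_path \<xi> \<omega>) j t e)"
      using that by (intro xbarj) auto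
    ultimately show ?thesis
      unfolding mtgc_x_def using that by (intro history_L2_mtgc_local[OF j]) auto
  qed
qed

lemma history_L2_mtgc_xhat:
  "e \<le> E \<Longrightarrow> history_L2 (past t e 0) (\<lambda>\<omega>. mtgc_xhat gF C N E H \<gamma> x0 (sample_path \<xi> \<omega>) t e)"
  unfolding mtgc_xhat_def by (intro history_L2_scaleR history_L2_sum history_L2_mtgc_xbarj) auto

lemma history_L2_mtgc_step:
  assumes j: "j < N" and e: "e < E"
  shows "history_L2 (past t (Suc e) 0) (\<lambda>\<omega>. mtgc_xbarj gF C N E H \<gamma> x0 (sample_path \<xi> \<omega>) j t e)"
    and "history_L2 (past t (Suc e) 0) (\<lambda>\<omega>. mtgc_xbarj gF C N E H \<gamma> x0 (sample_path \<xi> \<omega>) j t (Suc e))"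
    and "i \<in> C j \<Longrightarrow> h \<le> H \<Longrightarrow>
      history_L2 (past t (Suc e) 0) (\<lambda>\<omega>. mtgc_x gF C N E H \<gamma> x0 (sample_path \<xi> \<omega>) j t e i h)"
    and "history_L2 (past t (Suc e) 0) (\<lambda>\<omega>. mtgc_xhat gF C N E H \<gamma> x0 (sample_path \<xi> \<omega>) t e)"
    and "history_L2 (past t (Suc e) 0) (\<lambda>\<omega>. mtgc_y gF C N E H \<gamma> x0 (sample_path \<xi> \<omega>) t j)"
  using e by (auto intro: history_L2_past_mono[OF history_L2_mtgc_xbarj[OF j]] history_L2_mtgc_xbarj[OF j]
      history_L2_past_mono[OF history_L2_mtgc_x[OF j e]] history_L2_past_mono[OF history_L2_mtgc_xhat]
      history_L2_past_mono[OF history_L2_mtgc_y[OF j]])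

lemma nn_integral_noise_sum_clients_le:
  assumes j: "j < N" and eh: "e < E" "h < H" and S: "S \<subseteq> C j"
    and A: "A \<in> borel_measurable (history (past t e h))"
    and X: "\<And>i. i \<in> C j \<Longrightarrow> X i \<in> borel_measurable (history (past t e h))"
  shows "(\<lambda>\<omega>. A \<omega> + (\<Sum>i\<in>S. gF i (X i \<omega>) (\<xi> i t e h \<omega>) - GF i (X i \<omega>)))
      \<in> borel_measurable (history (past t e h \<union> (\<lambda>i. (i, t, e, h)) ` S)) \<and>
    (\<integral>\<^sup>+\<omega>. ennreal ((norm (A \<omega> + (\<Sum>i\<in>S. gF i (X i \<omega>) (\<xi> i t e h \<omega>) - GF i (X i \<omega>))))\<^sup>2) \<partial>M)
      \<le> (\<integral>\<^sup>+\<omega>. ennreal ((norm (A \<omega>))\<^sup>2) \<partial>M) + ennreal (real (card S) * \<sigma>\<^sup>2)"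
proof -
  have "finite S" using finite_subset[OF S C_fin[OF j]] .
  then show ?thesis using S
  proof (induction S rule: finite_subset_induct')
    case empty
    then show ?case using A by simp
  next
    case (insert i F)
    let ?K = "past t e h \<union> (\<lambda>i. (i, t, e, h)) ` F"
    let ?K' = "past t e h \<union> (\<lambda>i. (i, t, e, h)) ` insert i F"
    let ?A = "\<lambda>\<omega>. A \<omega> + (\<Sum>i\<in>F. gF i (X i \<omega>) (\<xi> i t e h \<omega>) - GF i (X i \<omega>))"
    let ?noise = "\<lambda>\<omega>. gF i (X i \<omega>) (\<xi> i t e h \<omega>) - GF i (X i \<omega>)"
    have i: "i \<in> C j" using insert by auto
    have K: "?K \<subseteq> sample_indices" "?K' \<subseteq> sample_indices"
      using past_subset_sample_indices insert(3) i j eh by auto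
    have k: "(i, t, e, h) \<in> sample_indices" "(i, t, e, h) \<notin> ?K"
      using j i eh insert(4) not_in_past by auto
    have A_K: "?A \<in> borel_measurable (history ?K)" using insert(5) by simp
    have X_K: "X i \<in> borel_measurable (history ?K)"
      using measurable_history_mono[OF X[OF i]] by auto
    have sum_insert: "A \<omega> + (\<Sum>i\<in>insert i F. gF i (X i \<omega>) (\<xi> i t e h \<omega>) - GF i (X i \<omega>)) = ?A \<omega> + ?noise \<omega>"
      for \<omega> using insert(1,4) by (simp add: algebra_simps)
    have "?K \<subseteq> ?K'" by auto
    then have "?A \<in> borel_measurable (history ?K')" "X i \<in> borel_measurable (history ?K')"
      using measurable_history_mono[OF A_K] measurable_history_mono[OF X_K] by blast+
    then have meas: "(\<lambda>\<omega>. ?A \<omega> + ?noise \<omega>) \<in> borel_measurable (history ?K')"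
      using measurable_history_gF[OF j i _ K(2)] borel_measurable_GF[OF j i] by measurable
    have "(\<integral>\<^sup>+\<omega>. ennreal ((norm (?A \<omega> + ?noise \<omega>))\<^sup>2) \<partial>M)
        \<le> (\<integral>\<^sup>+\<omega>. ennreal ((norm (?A \<omega>))\<^sup>2) \<partial>M) + ennreal (\<sigma>\<^sup>2)"
      by (rule nn_integral_noise_power2_le[OF j i K(1) k A_K X_K])
    also have "\<dots> \<le> (\<integral>\<^sup>+\<omega>. ennreal ((norm (A \<omega>))\<^sup>2) \<partial>M) + ennreal (real (card F) * \<sigma>\<^sup>2) + ennreal (\<sigma>\<^sup>2)"
      using insert(5) by (intro add_right_mono) simp
    also have "\<dots> = (\<integral>\<^sup>+\<omega>. ennreal ((norm (A \<omega>))\<^sup>2) \<partial>M) + ennreal (real (card (insert i F)) * \<sigma>\<^sup>2)"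
      using insert(1,4) by (simp add: add.assoc ennreal_plus[symmetric] algebra_simps del: ennreal_plus)
    finally show ?case
      using meas unfolding sum_insert by simp
  qed
qed

lemma nn_integral_noise_sum_le:
  assumes j: "j < N" and e: "e < E"
    and X: "\<And>i h. i \<in> C j \<Longrightarrow> h < H \<Longrightarrow> X i h \<in> borel_measurable (history (past t e h))"
  shows "h \<le> H \<Longrightarrow>
    (\<lambda>\<omega>. \<Sum>h'<h. \<Sum>i\<in>C j. gF i (X i h' \<omega>) (\<xi> i t e h' \<omega>) - GF i (X i h' \<omega>))
      \<in> borel_measurable (history (past t e h)) \<and>
    (\<integral>\<^sup>+\<omega>. ennreal ((norm (\<Sum>h'<h. \<Sum>i\<in>C j. gF i (X i h' \<omega>) (\<xi> i t e h' \<omega>) - GF i (X i h' \<omega>)))\<^sup>2) \<partial>M)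
      \<le> ennreal (real h * real (card (C j)) * \<sigma>\<^sup>2)"
proof (induction h)
  case (Suc h)
  let ?T = "\<lambda>\<omega>. \<Sum>h'<h. \<Sum>i\<in>C j. gF i (X i h' \<omega>) (\<xi> i t e h' \<omega>) - GF i (X i h' \<omega>)"
  let ?noise = "\<lambda>\<omega>. \<Sum>i\<in>C j. gF i (X i h \<omega>) (\<xi> i t e h \<omega>) - GF i (X i h \<omega>)"
  have h: "h < H" using Suc by simp
  have T: "?T \<in> borel_measurable (history (past t e h))"
    "(\<integral>\<^sup>+\<omega>. ennreal ((norm (?T \<omega>))\<^sup>2) \<partial>M) \<le> ennreal (real h * real (card (C j)) * \<sigma>\<^sup>2)"
    using Suc by auto
  have step: "(\<lambda>\<omega>. ?T \<omega> + ?noise \<omega>) \<in> borel_measurable (history (past t e h \<union> (\<lambda>i. (i, t, e, h)) ` C j)) \<and>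
      (\<integral>\<^sup>+\<omega>. ennreal ((norm (?T \<omega> + ?noise \<omega>))\<^sup>2) \<partial>M)
        \<le> (\<integral>\<^sup>+\<omega>. ennreal ((norm (?T \<omega>))\<^sup>2) \<partial>M) + ennreal (real (card (C j)) * \<sigma>\<^sup>2)"
    using X h by (intro nn_integral_noise_sum_clients_le[OF j e h order.refl T(1)]) auto
  have "past t e h \<union> (\<lambda>i. (i, t, e, h)) ` C j \<subseteq> past t e (Suc h)"
    using j e h by (auto simp: past_def)
  then have "(\<lambda>\<omega>. ?T \<omega> + ?noise \<omega>) \<in> borel_measurable (history (past t e (Suc h)))"
    using step measurable_history_mono by blast
  moreover have "(\<integral>\<^sup>+\<omega>. ennreal ((norm (?T \<omega> + ?noise \<omega>))\<^sup>2) \<partial>M)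
      \<le> ennreal (real h * real (card (C j)) * \<sigma>\<^sup>2) + ennreal (real (card (C j)) * \<sigma>\<^sup>2)"
    using step T(2) by (meson add_right_mono order_trans)
  ultimately show ?case
    by (simp add: ennreal_plus[symmetric] algebra_simps del: ennreal_plus)
qed simp

lemma history_L2_integrable_norm_power2:
  "history_L2 K f \<Longrightarrow> integrable M (\<lambda>\<omega>. (norm (f \<omega>))\<^sup>2)"
  unfolding history_L2_def square_integrable_def by simp

lemma history_L2_grad_fj:
  "j < N \<Longrightarrow> history_L2 K X \<Longrightarrow> history_L2 K (\<lambda>\<omega>. grad_fj GF C j (X \<omega>))"
  unfolding grad_fj_def by (intro history_L2_scaleR history_L2_sum history_L2_GF)

lemma history_L2_grad_f:
  "history_L2 K X \<Longrightarrow> history_L2 K (\<lambda>\<omega>. grad_f GF C N (X \<omega>))"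
  unfolding grad_f_def by (intro history_L2_scaleR history_L2_sum history_L2_grad_fj) auto

lemma mtgc_noise_power2_le:
  fixes x_init :: 'a and t :: nat and \<gamma> :: real
  assumes j: "j < N" and e: "e < E"
  defines "T \<equiv> \<lambda>\<omega>. \<Sum>h<H. \<Sum>i\<in>C j. gF i (mtgc_x gF C N E H \<gamma> x_init (sample_path \<xi> \<omega>) j t e i h) (\<xi> i t e h \<omega>)
      - GF i (mtgc_x gF C N E H \<gamma> x_init (sample_path \<xi> \<omega>) j t e i h)"
  shows "integrable M (\<lambda>\<omega>. (norm (T \<omega>))\<^sup>2)"
    and "(\<integral>\<omega>. (norm (T \<omega>))\<^sup>2 \<partial>M) \<le> real H * real (card (C j)) * \<sigma>\<^sup>2"
proof -
  have "T \<in> borel_measurable (history (past t e H)) \<and>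
      (\<integral>\<^sup>+\<omega>. ennreal ((norm (T \<omega>))\<^sup>2) \<partial>M) \<le> ennreal (real H * real (card (C j)) * \<sigma>\<^sup>2)"
    unfolding T_def using history_L2_mtgc_x[OF j e] unfolding history_L2_def
    by (intro nn_integral_noise_sum_le[OF j e]) auto
  moreover from this have [measurable]: "T \<in> borel_measurable M"
    using measurable_from_history[OF past_subset_sample_indices] by blast
  ultimately show int: "integrable M (\<lambda>\<omega>. (norm (T \<omega>))\<^sup>2)"
    by (intro integrableI_nonneg) (auto simp: le_less_trans[OF _ ennreal_less_top])
  have "ennreal (\<integral>\<omega>. (norm (T \<omega>))\<^sup>2 \<partial>M) = (\<integral>\<^sup>+\<omega>. ennreal ((norm (T \<omega>))\<^sup>2) \<partial>M)"
    by (rule nn_integral_eq_integral[OF int, symmetric]) auto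
  with \<open>T \<in> _ \<and> _\<close> have "ennreal (\<integral>\<omega>. (norm (T \<omega>))\<^sup>2 \<partial>M) \<le> ennreal (real H * real (card (C j)) * \<sigma>\<^sup>2)"
    by simp
  then show "(\<integral>\<omega>. (norm (T \<omega>))\<^sup>2 \<partial>M) \<le> real H * real (card (C j)) * \<sigma>\<^sup>2"
    by (subst (asm) ennreal_le_iff) auto
qed

lemma integral_mtgc_xbarj_step_power2_le:
  fixes x0 :: 'a and t :: nat and \<gamma> :: real
  assumes j: "j < N" and e: "e < E"
  defines "xb \<equiv> \<lambda>\<omega>. mtgc_xbarj gF C N E H \<gamma> x0 (sample_path \<xi> \<omega>) j t e"
    and "x \<equiv> \<lambda>i h \<omega>. mtgc_x gF C N E H \<gamma> x0 (sample_path \<xi> \<omega>) j t e i h"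
    and "xh \<equiv> \<lambda>\<omega>. mtgc_xhat gF C N E H \<gamma> x0 (sample_path \<xi> \<omega>) t e"
    and "y \<equiv> \<lambda>\<omega>. mtgc_y gF C N E H \<gamma> x0 (sample_path \<xi> \<omega>) t j"
    and "n \<equiv> real (card (C j))"
  shows "(\<integral>\<omega>. (norm (mtgc_xbarj gF C N E H \<gamma> x0 (sample_path \<xi> \<omega>) j t (Suc e) - xb \<omega>))\<^sup>2 \<partial>M)
    \<le> 8 * \<gamma>\<^sup>2 * real H * L\<^sup>2 * ((1 / n) * (\<Sum>i\<in>C j. \<Sum>h<H. \<integral>\<omega>. (norm (xb \<omega> - x i h \<omega>))\<^sup>2 \<partial>M))
      + 8 * \<gamma>\<^sup>2 * (real H)\<^sup>2 * L\<^sup>2 * (\<integral>\<omega>. (norm (xh \<omega> - xb \<omega>))\<^sup>2 \<partial>M)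
      + 8 * \<gamma>\<^sup>2 * (real H)\<^sup>2 * (\<integral>\<omega>. (norm (y \<omega> + grad_fj GF C j (xh \<omega>) - grad_f GF C N (xh \<omega>)))\<^sup>2 \<partial>M)
      + 8 * \<gamma>\<^sup>2 * (real H)\<^sup>2 * (\<integral>\<omega>. (norm (grad_f GF C N (xh \<omega>)))\<^sup>2 \<partial>M)
      + 2 * \<gamma>\<^sup>2 * real H * (1 / n) * \<sigma>\<^sup>2"
    (is "(\<integral>\<omega>. (norm (?xb' \<omega> - xb \<omega>))\<^sup>2 \<partial>M) \<le> _")
proof -
  have C: "finite (C j)" "C j \<noteq> {}" using C_fin[OF j] C_ne[OF j] .
  then have n: "n > 0" unfolding n_def by (simp add: card_gt_0_iff)
  define T where "T \<omega> = (\<Sum>h<H. \<Sum>i\<in>C j. gF i (x i h \<omega>) (\<xi> i t e h \<omega>) - GF i (x i h \<omega>))" for \<omega>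
  define R where "R \<omega> = 2 * \<gamma>\<^sup>2 / n\<^sup>2 * (norm (T \<omega>))\<^sup>2
      + 8 * \<gamma>\<^sup>2 * real H * L\<^sup>2 * ((1 / n) * (\<Sum>i\<in>C j. \<Sum>h<H. (norm (xb \<omega> - x i h \<omega>))\<^sup>2))
      + 8 * \<gamma>\<^sup>2 * (real H)\<^sup>2 * (L\<^sup>2 * (norm (xh \<omega> - xb \<omega>))\<^sup>2
        + (norm (y \<omega> + grad_fj GF C j (xh \<omega>) - grad_f GF C N (xh \<omega>)))\<^sup>2 + (norm (grad_f GF C N (xh \<omega>)))\<^sup>2)" for \<omega>
  have pw: "(norm (?xb' \<omega> - xb \<omega>))\<^sup>2 \<le> R \<omega>" for \<omega>
    using norm_mtgc_xbarj_step_power2_le[where C=C and j=j and G=GF, OF C A1[OF j],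
        where g=gF and N=N and E=E and H=H and \<gamma>=\<gamma> and x_init=x0 and xi="sample_path \<xi> \<omega>"
        and t=t and e=e and xh="xh \<omega>" and v="grad_f GF C N (xh \<omega>)"]
    unfolding R_def T_def xb_def x_def y_def n_def grad_fj_def by (simp add: sample_path_def)
  let ?K = "past t (Suc e) 0"
  note L2 = history_L2_mtgc_step[OF j e]
  have L2_xb: "history_L2 ?K xb" and L2_xb': "history_L2 ?K ?xb'" and L2_xh: "history_L2 ?K xh"
    and L2_y: "history_L2 ?K y"
    unfolding xb_def xh_def y_def using L2 by simp_all
  have L2_x: "history_L2 ?K (x i h)" if "i \<in> C j" "h \<le> H" for i h
    unfolding x_def by (rule L2(3)[OF that])
  note integrable = history_L2_integrable_norm_power2
  have int_Q: "integrable M (\<lambda>\<omega>. (norm (xb \<omega> - x i h \<omega>))\<^sup>2)" if "i \<in> C j" "h < H" for i h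
    using that by (intro integrable[OF history_L2_diff[OF L2_xb L2_x]]) auto
  have int_D: "integrable M (\<lambda>\<omega>. (norm (xh \<omega> - xb \<omega>))\<^sup>2)"
    by (rule integrable[OF history_L2_diff[OF L2_xh L2_xb]])
  have int_Y: "integrable M (\<lambda>\<omega>. (norm (y \<omega> + grad_fj GF C j (xh \<omega>) - grad_f GF C N (xh \<omega>)))\<^sup>2)"
    by (rule integrable[OF history_L2_diff[OF history_L2_add[OF L2_y history_L2_grad_fj[OF j L2_xh]]
          history_L2_grad_f[OF L2_xh]]])
  have int_G: "integrable M (\<lambda>\<omega>. (norm (grad_f GF C N (xh \<omega>)))\<^sup>2)"
    by (rule integrable[OF history_L2_grad_f[OF L2_xh]])
  have noise: "integrable M (\<lambda>\<omega>. (norm (T \<omega>))\<^sup>2)" "(\<integral>\<omega>. (norm (T \<omega>))\<^sup>2 \<partial>M) \<le> real H * n * \<sigma>\<^sup>2"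
    using mtgc_noise_power2_le[OF j e, where x_init=x0 and t=t and \<gamma>=\<gamma>]
    unfolding T_def x_def n_def by simp_all
  have "integrable M R"
    unfolding R_def using int_Q int_D int_Y int_G noise(1)
    by (intro Bochner_Integration.integrable_add integrable_mult_right Bochner_Integration.integrable_sum) auto
  then have "(\<integral>\<omega>. (norm (?xb' \<omega> - xb \<omega>))\<^sup>2 \<partial>M) \<le> (\<integral>\<omega>. R \<omega> \<partial>M)"
    by (intro integral_mono pw integrable[OF history_L2_diff[OF L2_xb' L2_xb]])
  also have "(\<integral>\<omega>. R \<omega> \<partial>M) = 2 * \<gamma>\<^sup>2 / n\<^sup>2 * (\<integral>\<omega>. (norm (T \<omega>))\<^sup>2 \<partial>M)
      + 8 * \<gamma>\<^sup>2 * real H * L\<^sup>2 * ((1 / n) * (\<Sum>i\<in>C j. \<Sum>h<H. \<integral>\<omega>. (norm (xb \<omega> - x i h \<omega>))\<^sup>2 \<partial>M))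
      + 8 * \<gamma>\<^sup>2 * (real H)\<^sup>2 * (L\<^sup>2 * (\<integral>\<omega>. (norm (xh \<omega> - xb \<omega>))\<^sup>2 \<partial>M)
        + (\<integral>\<omega>. (norm (y \<omega> + grad_fj GF C j (xh \<omega>) - grad_f GF C N (xh \<omega>)))\<^sup>2 \<partial>M)
        + (\<integral>\<omega>. (norm (grad_f GF C N (xh \<omega>)))\<^sup>2 \<partial>M))"
  proof -
    have "(\<integral>\<omega>. (\<Sum>i\<in>C j. \<Sum>h<H. (norm (xb \<omega> - x i h \<omega>))\<^sup>2) \<partial>M)
        = (\<Sum>i\<in>C j. \<integral>\<omega>. (\<Sum>h<H. (norm (xb \<omega> - x i h \<omega>))\<^sup>2) \<partial>M)"
      using int_Q by (intro Bochner_Integration.integral_sum Bochner_Integration.integrable_sum) auto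
    also have "\<dots> = (\<Sum>i\<in>C j. \<Sum>h<H. \<integral>\<omega>. (norm (xb \<omega> - x i h \<omega>))\<^sup>2 \<partial>M)"
      using int_Q by (intro sum.cong refl Bochner_Integration.integral_sum) auto
    finally have sum_Q: "(\<integral>\<omega>. (\<Sum>i\<in>C j. \<Sum>h<H. (norm (xb \<omega> - x i h \<omega>))\<^sup>2) \<partial>M)
        = (\<Sum>i\<in>C j. \<Sum>h<H. \<integral>\<omega>. (norm (xb \<omega> - x i h \<omega>))\<^sup>2 \<partial>M)" .
    have int_sum_Q: "integrable M (\<lambda>\<omega>. \<Sum>i\<in>C j. \<Sum>h<H. (norm (xb \<omega> - x i h \<omega>))\<^sup>2)"
      using int_Q by (intro Bochner_Integration.integrable_sum) auto
    show ?thesis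
      unfolding R_def using int_sum_Q int_D int_Y int_G noise(1)
      by (simp add: sum_Q del: integral_sum')
  qed
  also have "2 * \<gamma>\<^sup>2 / n\<^sup>2 * (\<integral>\<omega>. (norm (T \<omega>))\<^sup>2 \<partial>M) \<le> 2 * \<gamma>\<^sup>2 * real H * (1 / n) * \<sigma>\<^sup>2"
  proof -
    have "2 * \<gamma>\<^sup>2 / n\<^sup>2 * (\<integral>\<omega>. (norm (T \<omega>))\<^sup>2 \<partial>M) \<le> 2 * \<gamma>\<^sup>2 / n\<^sup>2 * (real H * n * \<sigma>\<^sup>2)"
      using noise(2) by (intro mult_left_mono) auto
    also have "\<dots> = 2 * \<gamma>\<^sup>2 * real H * (1 / n) * \<sigma>\<^sup>2"
      using n by (simp add: power2_eq_square)
    finally show ?thesis .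
  qed
  finally show ?thesis
    by (simp add: algebra_simps)
qed

end

theorem lemmaC2p6:
  fixes M :: "'m measure"
    and D :: "nat \<Rightarrow> 's measure"
    and F :: "nat \<Rightarrow> 'a::euclidean_space \<Rightarrow> 's \<Rightarrow> real"
    and gF :: "nat \<Rightarrow> 'a \<Rightarrow> 's \<Rightarrow> 'a"
    and GF :: "nat \<Rightarrow> 'a \<Rightarrow> 'a"
    and C :: "nat \<Rightarrow> nat set"
    and N E H :: nat
    and \<gamma> L \<sigma> :: real
    and x0 :: 'a
    and \<xi> :: "nat \<Rightarrow> nat \<Rightarrow> nat \<Rightarrow> nat \<Rightarrow> 'm \<Rightarrow> 's"
    and t :: nat
  assumes M: "prob_space M"
    and N: "N \<ge> 1" and E: "E \<ge> 1" and H: "H \<ge> 1" and gamma: "\<gamma> > 0"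
    and C_fin: "\<And>j. j < N \<Longrightarrow> finite (C j)"
    and C_ne: "\<And>j. j < N \<Longrightarrow> C j \<noteq> {}"
    and C_disj: "\<And>j j'. j < N \<Longrightarrow> j' < N \<Longrightarrow> j \<noteq> j' \<Longrightarrow> C j \<inter> C j' = {}"
    and D_prob: "\<And>j i. j < N \<Longrightarrow> i \<in> C j \<Longrightarrow> prob_space (D i)"
    and F_int: "\<And>j i x. j < N \<Longrightarrow> i \<in> C j \<Longrightarrow> integrable (D i) (F i x)"
    and gF_grad: "\<And>j i x s. j < N \<Longrightarrow> i \<in> C j \<Longrightarrow> s \<in> space (D i) \<Longrightarrow>
        ((\<lambda>y. F i y s) has_derivative (\<lambda>v. gF i x s \<bullet> v)) (at x)"
    and GF_grad: "\<And>j i x. j < N \<Longrightarrow> i \<in> C j \<Longrightarrow>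
        ((\<lambda>y. \<integral>s. F i y s \<partial>D i) has_derivative (\<lambda>v. GF i x \<bullet> v)) (at x)"
    and gF_meas: "\<And>j i. j < N \<Longrightarrow> i \<in> C j \<Longrightarrow>
        (\<lambda>p. gF i (fst p) (snd p)) \<in> borel_measurable (borel \<Otimes>\<^sub>M D i)"
    and A1: "\<And>j i x y. j < N \<Longrightarrow> i \<in> C j \<Longrightarrow> norm (GF i x - GF i y) \<le> L * norm (x - y)"
    and A2_int: "\<And>j i x. j < N \<Longrightarrow> i \<in> C j \<Longrightarrow> integrable (D i) (gF i x)"
    and A2_unbiased: "\<And>j i x. j < N \<Longrightarrow> i \<in> C j \<Longrightarrow> (\<integral>s. gF i x s \<partial>D i) = GF i x"
    and A2_var_int: "\<And>j i x. j < N \<Longrightarrow> i \<in> C j \<Longrightarrow>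
        integrable (D i) (\<lambda>s. (norm (gF i x s - GF i x))\<^sup>2)"
    and A2_var: "\<And>j i x. j < N \<Longrightarrow> i \<in> C j \<Longrightarrow>
        (\<integral>s. (norm (gF i x s - GF i x))\<^sup>2 \<partial>D i) \<le> \<sigma>\<^sup>2"
    and samples_distr: "\<And>j i t' e h. j < N \<Longrightarrow> i \<in> C j \<Longrightarrow> e < E \<Longrightarrow> h < H \<Longrightarrow>
        distr M (D i) (\<xi> i t' e h) = D i"
    and samples_indep: "prob_space.indep_vars M (\<lambda>(i, t', e, h). D i) (\<lambda>(i, t', e, h). \<xi> i t' e h)
        {(i, t', e, h). (\<exists>j<N. i \<in> C j) \<and> e < E \<and> h < H}"
  shows "(\<Sum>e<E. (1 / real N) * (\<Sum>j<N.
        \<integral>\<omega>. (norm (mtgc_xbarj gF C N E H \<gamma> x0 (sample_path \<xi> \<omega>) j t (Suc e) - mtgc_xbarj gF C N E H \<gamma> x0 (sample_path \<xi> \<omega>) j t e))\<^sup>2 \<partial>M))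
    \<le> 8 * \<gamma>\<^sup>2 * (real H)\<^sup>2 * L\<^sup>2 *
         (\<Sum>e<E. (1 / (real N * real H)) * (\<Sum>j<N. (1 / real (card (C j))) *
           (\<Sum>i\<in>C j. \<Sum>h<H. \<integral>\<omega>. (norm (mtgc_xbarj gF C N E H \<gamma> x0 (sample_path \<xi> \<omega>) j t e - mtgc_x gF C N E H \<gamma> x0 (sample_path \<xi> \<omega>) j t e i h))\<^sup>2 \<partial>M)))
       + 8 * \<gamma>\<^sup>2 * (real H)\<^sup>2 * L\<^sup>2 *
         (\<Sum>e<E. (1 / real N) * (\<Sum>j<N. \<integral>\<omega>. (norm (mtgc_xhat gF C N E H \<gamma> x0 (sample_path \<xi> \<omega>) t e - mtgc_xbarj gF C N E H \<gamma> x0 (sample_path \<xi> \<omega>) j t e))\<^sup>2 \<partial>M))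
       + 8 * \<gamma>\<^sup>2 * (real H)\<^sup>2 * (\<Sum>e<E. (1 / real N) * (\<Sum>j<N.
           \<integral>\<omega>. (norm (mtgc_y gF C N E H \<gamma> x0 (sample_path \<xi> \<omega>) t j + grad_fj GF C j (mtgc_xhat gF C N E H \<gamma> x0 (sample_path \<xi> \<omega>) t e) - grad_f GF C N (mtgc_xhat gF C N E H \<gamma> x0 (sample_path \<xi> \<omega>) t e)))\<^sup>2 \<partial>M))
       + 8 * \<gamma>\<^sup>2 * (real H)\<^sup>2 * (\<Sum>e<E. \<integral>\<omega>. (norm (grad_f GF C N (mtgc_xhat gF C N E H \<gamma> x0 (sample_path \<xi> \<omega>) t e)))\<^sup>2 \<partial>M)
       + 2 * \<gamma>\<^sup>2 * real E * real H * ((1 / real N) * (\<Sum>j<N. 1 / real (card (C j)))) * \<sigma>\<^sup>2"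
proof -
  interpret mtgc_setup M D gF GF C N E H L \<sigma> \<xi>
    by (intro mtgc_setup.intro M mtgc_setup_axioms.intro) (fact assms)+
  show ?thesis
    by (rule sum_group_bounds_le[OF N H], rule integral_mtgc_xbarj_step_power2_le) auto
qed

end
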